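(* Let $d, D, k, L, N$ be positive integers. Let $A^1,\dots,A^d \in \mathbb{C}^{D\times D}$ define an injective matrix product state tensor with injectivity length $L$, and for $N$ sites let $$\ket{\psi_N}=\sum_{i_1,\dots,i_N=1}^d \operatorname{Tr}\big(A^{i_1}A^{i_2}\cdots A^{i_N}\big)\ket{i_1 i_2\cdots i_N}\in(\mathbb{C}^d)^{\otimes N}.$$ Let $o$ be an operator on $(\mathbb{C}^d)^{\otimes k}$ (not necessarily Hermitian), with matrix elements $o^{i_1\cdots i_k}_{j_1\cdots j_k}=\bra{i_1\cdots i_k}o\ket{j_1\cdots j_k}$, and let $O_N=\sum_{i=1}^N o_i$, where $o_i$ denotes $o$ acting on the sites $i,i+1,\dots,i+k-1$ (sites indexed modulo $N$) and as the identity elsewhere. Assume $N>2L+2k-1$, and let $E_N\in\mathbb{C}$, $\epsilon=E_N/N$. Then $$O_N\ket{\psi_N}=E_N\ket{\psi_N}$$ if and only if there exist matrices $B^{i_1\cdots i_{k-1}}\in\mathbb{C}^{D\times D}$, one for each $(i_1,\dots,i_{k-1})\in\{1,\dots,d\}^{k-1}$, such that for all $i_1,\dots,i_k\in\{1,\dots,d\}$ $$\sum_{j_1,\dots,j_k=1}^d\Big(o^{i_1\cdots i_k}_{j_1\cdots j_k}-\epsilon\,\delta_{i_1j_1}\cdots\delta_{i_kj_k}\Big)A^{j_1}A^{j_2}\cdots A^{j_k}=A^{i_1}B^{i_2\cdots i_k}-B^{i_1\cdots i_{k-1}}A^{i_k}$$ (as an equality of $D\times D$ matrices).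
   Context: For $M\ge1$ define the linear map $\Gamma_M:\mathbb{C}^{D\times D}\to(\mathbb{C}^d)^{\otimes M}$, $\Gamma_M(X)=\sum_{i_1,\dots,i_M}\operatorname{Tr}(XA^{i_1}\cdots A^{i_M})\ket{i_1\cdots i_M}$. The tensor $A$ is called injective if $\Gamma_M$ is injective for some $M$ (then it is injective for all larger $M$), and the injectivity length $L$ is the minimal such $M$. The matrices $A^i$ and the local operator $o$ are the same on every site (translation invariance). *)

theory Defs
  imports "HOL-Analysis.Analysis"
begin

text \<open>Physical indices {1..d} are the elements of a finite type 'd (d = CARD('d));
  bond indices {1..D} the elements of a finite type 'D (D = CARD('D)).
  A basis vector |i_1 ... i_n> is a list of length n over 'd, and a vector of
  (C^d)^{tensor n} is a function from such lists to complex (only values on lists of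
  length n matter).\<close>



definition words :: "nat \<Rightarrow> 'd list set" where
  "words n = {ws. length ws = n}"

definition mscale :: "complex \<Rightarrow> complex^'D^'D \<Rightarrow> complex^'D^'D" where
  "mscale c M = (\<chi> a b. c * M $ a $ b)"

definition mprod :: "('d \<Rightarrow> complex^'D^'D) \<Rightarrow> 'd list \<Rightarrow> complex^'D^'D" where
  "mprod A ws = foldr (\<lambda>i M. A i ** M) ws (mat 1)"

definition Gamma :: "('d \<Rightarrow> complex^'D^'D) \<Rightarrow> nat \<Rightarrow> complex^'D^'D \<Rightarrow> 'd list \<Rightarrow> complex" where
  "Gamma A M X = (\<lambda>ws. if length ws = M then trace (X ** mprod A ws) else 0)"

definition injective_at :: "('d \<Rightarrow> complex^'D^'D) \<Rightarrow> nat \<Rightarrow> bool" where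
  "injective_at A M \<longleftrightarrow> inj (Gamma A M)"

definition injectivity_length :: "('d \<Rightarrow> complex^'D^'D) \<Rightarrow> nat \<Rightarrow> bool" where
  "injectivity_length A L \<longleftrightarrow> 1 \<le> L \<and> injective_at A L \<and> (\<forall>M. 1 \<le> M \<and> M < L \<longrightarrow> \<not> injective_at A M)"

definition mps_state :: "('d \<Rightarrow> complex^'D^'D) \<Rightarrow> nat \<Rightarrow> 'd list \<Rightarrow> complex" where
  "mps_state A N = (\<lambda>ws. if length ws = N then trace (mprod A ws) else 0)"

definition local_window :: "nat \<Rightarrow> nat \<Rightarrow> nat \<Rightarrow> 'd list \<Rightarrow> 'd list" where
  "local_window N k i xs = map (\<lambda>t. xs ! ((i + t) mod N)) [0..<k]"

definition site_update :: "nat \<Rightarrow> nat \<Rightarrow> 'd list \<Rightarrow> 'd list \<Rightarrow> 'd list" where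
  "site_update N i js xs =
     map (\<lambda>p. if (p + N - i) mod N < length js then js ! ((p + N - i) mod N) else xs ! p) [0..<N]"

text \<open>O_N = sum_{i} o_i applied to a vector v of (C^d)^{tensor N}; o is given by its
  matrix elements o is js = <is| o |js> (is, js of length k); sites i = 0..N-1.\<close>
definition local_sum_op :: "nat \<Rightarrow> nat \<Rightarrow> ('d list \<Rightarrow> 'd list \<Rightarrow> complex)
      \<Rightarrow> ('d list \<Rightarrow> complex) \<Rightarrow> 'd list \<Rightarrow> complex" where
  "local_sum_op N k h v = (\<lambda>xs. if length xs = N then
      (\<Sum>i<N. \<Sum>js\<in>words k. h (local_window N k i xs) js * v (site_update N i js xs))
     else 0)"

end

theory Submission
  imports Defs
begin

text \<open>Writing X for the matrix-valued local term on the left of the characterization, the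
  coefficient of \<open>O_N |psi_N> - E |psi_N>\<close> at a configuration is the sum, over its N rotations, of
  \<open>Tr (X(window) A(rest))\<close>. If X has the form \<open>A B - B A\<close>, these cyclic sums telescope to zero.
  Conversely, since products of L tensor matrices span all matrices, the vanishing of the cyclic
  sums turns the open chain sums with fixed boundary words into well-defined linear maps of
  matrices. Comparing chains of neighbouring lengths shows that, up to a central correction growing
  linearly with the length, these maps obey a twisted Leibniz rule. Factoring the identity through
  products of A reduces that rule to an ordinary derivation of the matrix algebra, which is inner;
  this produces the matrices B. Finally the central correction vanishes, because the cyclic sums
  of the telescoping part already vanish.\<close>

section \<open>Complex matrices\<close>

lemma mscale_nth [simp]: "mscale c M $ i $ j = c * M $ i $ j"
  by (simp add: mscale_def)

global_interpretation cmat: vector_space "mscale :: complex \<Rightarrow> complex^'n^'n \<Rightarrow> complex^'n^'n"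
  by unfold_locales (simp_all add: vec_eq_iff algebra_simps)

global_interpretation cmat_pair: vector_space_pair
    "mscale :: complex \<Rightarrow> complex^'n^'n \<Rightarrow> complex^'n^'n"
    "mscale :: complex \<Rightarrow> complex^'m^'m \<Rightarrow> complex^'m^'m" ..

abbreviation mat_linear :: "(complex^'n^'n \<Rightarrow> complex^'m^'m) \<Rightarrow> bool" where
  "mat_linear \<equiv> Vector_Spaces.linear mscale mscale"

lemma matrix_mul_mscale_left: "mscale c M ** N = mscale c (M ** N)"
  for M N :: "complex^'n^'n"
  by (simp add: vec_eq_iff matrix_matrix_mult_def sum_distrib_left mult.assoc)

lemma matrix_mul_mscale_right: "M ** mscale c N = mscale c (M ** N)"
  for M N :: "complex^'n^'n"
  by (simp add: vec_eq_iff matrix_matrix_mult_def sum_distrib_left mult.left_commute)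

lemma matrix_add_rdistrib: "(A + B) ** C = A ** C + B ** C"
  for A B :: "'a::semiring_1^'n^'m"
  by (simp add: vec_eq_iff matrix_matrix_mult_def sum.distrib distrib_right)

lemma matrix_diff_ldistrib: "A ** (B - C) = A ** B - A ** C"
  for A :: "'a::ring_1^'n^'m"
  by (simp add: vec_eq_iff matrix_matrix_mult_def sum_subtractf right_diff_distrib)

lemma matrix_diff_rdistrib: "(A - B) ** C = A ** C - B ** C"
  for A B :: "'a::ring_1^'n^'m"
  by (simp add: vec_eq_iff matrix_matrix_mult_def sum_subtractf left_diff_distrib)

lemma matrix_mul_uminus_left: "(- A) ** B = - (A ** B)"
  for A :: "'a::ring_1^'n^'m"
  by (simp add: vec_eq_iff matrix_matrix_mult_def sum_negf)

lemma matrix_mul_zero [simp]: "(0::'a::semiring_1^'n^'m) ** A = 0" "A ** (0::'a^'p^'n) = 0"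
  by (simp_all add: vec_eq_iff matrix_matrix_mult_def)

lemma matrix_sum_ldistrib: "A ** sum f S = (\<Sum>i\<in>S. A ** f i)"
  for A :: "'a::semiring_1^'n^'m"
  by (induct S rule: infinite_finite_induct) (simp_all add: matrix_add_ldistrib)

lemma matrix_sum_rdistrib: "sum f S ** A = (\<Sum>i\<in>S. f i ** A)"
  for A :: "'a::semiring_1^'p^'n"
  by (induct S rule: infinite_finite_induct) (simp_all add: matrix_add_rdistrib)

lemma trace_sum: "trace (sum f S) = (\<Sum>i\<in>S. trace (f i :: 'a::comm_semiring_1^'n^'n))"
  unfolding trace_def by (simp add: sum_component) (rule sum.swap)

lemma trace_zero [simp]: "trace (0::'a::comm_semiring_1^'n^'n) = 0"
  by (simp add: trace_def)

lemma trace_mscale: "trace (mscale c M) = c * trace M"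
  by (simp add: trace_def sum_distrib_left)

lemma mat_linear_mul_left: "mat_linear (\<lambda>P. M ** P)"
  for M :: "complex^'n^'n"
  unfolding Vector_Spaces.linear_iff
  by (simp add: cmat.vector_space_axioms matrix_add_ldistrib matrix_mul_mscale_right)

lemma mat_linear_mul_right: "mat_linear (\<lambda>P. P ** M)"
  for M :: "complex^'n^'n"
  unfolding Vector_Spaces.linear_iff
  by (simp add: cmat.vector_space_axioms matrix_add_rdistrib matrix_mul_mscale_left)

lemma mat_linear_mul_both: "mat_linear (\<lambda>P. M ** P ** N)"
  for M N :: "complex^'n^'n"
  unfolding Vector_Spaces.linear_iff
  by (simp add: cmat.vector_space_axioms matrix_add_ldistrib matrix_add_rdistrib
      matrix_mul_mscale_left matrix_mul_mscale_right)

lemma mat_linear_compose_mul_left: "mat_linear f \<Longrightarrow> mat_linear (\<lambda>P. M ** f P)"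
  using Vector_Spaces.linear_compose[OF _ mat_linear_mul_left] by (auto simp: comp_def)

lemma mat_linear_compose_mul_right: "mat_linear f \<Longrightarrow> mat_linear (\<lambda>P. f P ** M)"
  using Vector_Spaces.linear_compose[OF _ mat_linear_mul_right] by (auto simp: comp_def)

lemma mat_linear_mul_left_compose: "mat_linear f \<Longrightarrow> mat_linear (\<lambda>P. f (M ** P))"
  using Vector_Spaces.linear_compose[OF mat_linear_mul_left] by (auto simp: comp_def)

lemma mat_linear_mul_right_compose: "mat_linear f \<Longrightarrow> mat_linear (\<lambda>P. f (P ** M))"
  using Vector_Spaces.linear_compose[OF mat_linear_mul_right] by (auto simp: comp_def)

definition matrix_unit :: "'n \<Rightarrow> 'n \<Rightarrow> 'a::zero_neq_one^'n^'n" where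
  "matrix_unit i j = (\<chi> a b. if a = i \<and> b = j then 1 else 0)"

lemma matrix_unit_nth: "matrix_unit i j $ a $ b = (if a = i \<and> b = j then 1 else 0)"
  by (simp add: matrix_unit_def)

lemma matrix_unit_mult:
  "matrix_unit a b ** matrix_unit c d = (if b = c then matrix_unit a d else (0::'a::semiring_1^'n^'n))"
  by (simp add: vec_eq_iff matrix_matrix_mult_def matrix_unit_nth if_distrib[of "\<lambda>x. x * _"]
      sum.delta cong: if_cong)

lemma matrix_unit_mult_assoc:
  "matrix_unit a b ** (matrix_unit c d ** M) = (if b = c then matrix_unit a d ** M else (0::'a::semiring_1^'n^'n))"
  by (simp add: matrix_mul_assoc matrix_unit_mult)

lemma trace_mul_matrix_unit: "trace (M ** matrix_unit i j) = M $ j $ i"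
  for M :: "'a::comm_semiring_1^'n^'n"
  by (simp add: trace_def matrix_matrix_mult_def matrix_unit_nth if_distrib[of "\<lambda>x. _ * x"]
      if_if_eq_conj[symmetric] cong: if_cong)

lemma matrix_eq_zero_if_trace_mul_zero:
  fixes M :: "'a::comm_semiring_1^'n^'n"
  assumes "\<And>P. trace (M ** P) = 0"
  shows "M = 0"
  using assms[of "matrix_unit _ _"] by (simp add: vec_eq_iff trace_mul_matrix_unit)

lemma sum_matrix_units_through: "(\<Sum>j\<in>UNIV. matrix_unit j r ** matrix_unit r j) = (mat 1 :: 'a::semiring_1^'n^'n)"
  by (simp add: vec_eq_iff matrix_unit_mult sum_component matrix_unit_nth mat_def
      if_if_eq_conj[symmetric] cong: if_cong)

lemma matrix_unit_expansion:
  "P = (\<Sum>a\<in>UNIV. \<Sum>b\<in>UNIV. mscale (P $ a $ b) (matrix_unit a b :: complex^'n^'n))"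
proof -
  have "(\<Sum>a\<in>UNIV. \<Sum>b\<in>UNIV. mscale (P $ a $ b) (matrix_unit a b :: complex^'n^'n)) $ i $ j =
      (\<Sum>a\<in>UNIV. if a = i then (\<Sum>b\<in>UNIV. if b = j then P $ a $ b else 0) else 0)" for i j
    unfolding sum_component by (intro sum.cong refl) (auto simp: matrix_unit_nth if_distrib[of "\<lambda>x. _ * x"] cong: if_cong)
  then show ?thesis by (simp add: vec_eq_iff)
qed

lemma mat_linear_eq_on_matrix_units:
  fixes f g :: "complex^'n^'n \<Rightarrow> complex^'m^'m"
  assumes "mat_linear f" "mat_linear g" "\<And>a b. f (matrix_unit a b) = g (matrix_unit a b)"
  shows "f P = g P"
  by (subst (1 2) matrix_unit_expansion)
    (simp add: assms cmat_pair.linear_sum cmat_pair.linear_scale)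

lemma derivation_corner_zero:
  fixes der :: "'a::ring_1^'n^'n \<Rightarrow> 'a^'n^'n"
  assumes leibniz: "\<And>P Q. der (P ** Q) = der P ** Q + P ** der Q"
  shows "matrix_unit r r ** der (matrix_unit r r) ** matrix_unit r r = 0"
proof -
  let ?e = "matrix_unit r r :: 'a^'n^'n"
  have idem: "der ?e = der ?e ** ?e + ?e ** der ?e"
    using leibniz[of ?e ?e] by (simp add: matrix_unit_mult)
  have "?e ** der ?e ** ?e = ?e ** (der ?e ** ?e + ?e ** der ?e) ** ?e"
    by (subst (1) idem) (rule refl)
  also have "\<dots> = ?e ** der ?e ** ?e + ?e ** der ?e ** ?e"
    by (simp add: matrix_add_ldistrib matrix_add_rdistrib matrix_mul_assoc[symmetric]
        matrix_unit_mult matrix_unit_mult_assoc)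
  finally show ?thesis
    by (metis add_cancel_right_right)
qed

lemma derivation_matrix_unit:
  fixes der :: "'a::ring_1^'n^'n \<Rightarrow> 'a^'n^'n" and r :: 'n
  assumes leibniz: "\<And>P Q. der (P ** Q) = der P ** Q + P ** der Q"
  defines "G \<equiv> \<Sum>j\<in>UNIV. der (matrix_unit j r) ** matrix_unit r j"
  shows "der (matrix_unit a b) = G ** matrix_unit a b - matrix_unit a b ** G"
proof -
  let ?E = "matrix_unit :: 'n \<Rightarrow> 'n \<Rightarrow> 'a^'n^'n"
  have der_zero: "der 0 = 0"
    using leibniz[of 0 0] by simp
  have G_left: "G ** ?E a b = der (?E a r) ** ?E r b"
    by (simp add: G_def matrix_sum_rdistrib matrix_mul_assoc[symmetric] matrix_unit_mult
        if_distrib[of "\<lambda>x. _ ** x"] cong: if_cong)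
  have "?E a r ** (der (?E r b) ** ?E j r + ?E r b ** der (?E j r)) ** ?E r j =
      (if j = b then ?E a r ** der (?E r r) ** ?E r b else 0)" for j
    using leibniz[of "?E r b" "?E j r"] by (auto simp: matrix_unit_mult der_zero)
  then have "(\<Sum>j\<in>UNIV. ?E a r ** (der (?E r b) ** ?E j r + ?E r b ** der (?E j r)) ** ?E r j) =
      ?E a r ** der (?E r r) ** ?E r b"
    by simp
  also have "\<dots> = ?E a r ** (?E r r ** der (?E r r) ** ?E r r) ** ?E r b"
    by (simp add: matrix_mul_assoc[symmetric] matrix_unit_mult matrix_unit_mult_assoc)
  also have "\<dots> = 0"
    by (simp add: derivation_corner_zero[OF leibniz])
  also have "(\<Sum>j\<in>UNIV. ?E a r ** (der (?E r b) ** ?E j r + ?E r b ** der (?E j r)) ** ?E r j) =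
      ?E a r ** der (?E r b) ** (\<Sum>j\<in>UNIV. ?E j r ** ?E r j) + ?E a b ** G"
    by (simp add: G_def matrix_add_ldistrib matrix_add_rdistrib sum.distrib matrix_sum_ldistrib
        matrix_mul_assoc[symmetric] matrix_unit_mult matrix_unit_mult_assoc)
  finally have G_right: "?E a r ** der (?E r b) = - (?E a b ** G)"
    by (simp add: sum_matrix_units_through eq_neg_iff_add_eq_0)
  have "der (?E a b) = der (?E a r ** ?E r b)"
    by (simp add: matrix_unit_mult)
  also have "\<dots> = G ** ?E a b - ?E a b ** G"
    by (simp add: leibniz G_left G_right)
  finally show ?thesis .
qed

lemma derivation_is_inner:
  fixes der :: "complex^'n^'n \<Rightarrow> complex^'n^'n"
  assumes "mat_linear der" and leibniz: "\<And>P Q. der (P ** Q) = der P ** Q + P ** der Q"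
  obtains G where "\<And>P. der P = G ** P - P ** G"
proof
  define G where "G = (\<Sum>j\<in>UNIV. der (matrix_unit j undefined) ** matrix_unit undefined j)"
  show "der P = G ** P - P ** G" for P
  proof (rule mat_linear_eq_on_matrix_units[OF assms(1)])
    show "mat_linear (\<lambda>P. G ** P - P ** G)"
      by (intro cmat_pair.linear_compose_sub mat_linear_mul_left mat_linear_mul_right)
  qed (simp add: G_def derivation_matrix_unit[OF leibniz])
qed

section \<open>Products of the tensor matrices\<close>

lemma mprod_Nil [simp]: "mprod A [] = mat 1"
  by (simp add: mprod_def)

lemma mprod_Cons [simp]: "mprod A (a # w) = A a ** mprod A w"
  by (simp add: mprod_def)

lemma mprod_append: "mprod A (u @ w) = mprod A u ** mprod A w"
  by (induct u) (simp_all add: matrix_mul_assoc)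

lemma mprod_snoc: "mprod A (u @ [a]) = mprod A u ** A a"
  by (simp add: mprod_append)

lemma finite_words [simp]: "finite (words n :: 'd::finite list set)"
  unfolding words_def using finite_lists_length_eq[of "UNIV :: 'd set" n] by simp

lemma mem_words [simp]: "xs \<in> words n \<longleftrightarrow> length xs = n"
  by (simp add: words_def)

definition word_comb :: "('d \<Rightarrow> complex^'D^'D) \<Rightarrow> nat \<Rightarrow> ('d list \<Rightarrow> complex) \<Rightarrow> complex^'D^'D" where
  "word_comb A m \<alpha> = (\<Sum>x\<in>words m. mscale (\<alpha> x) (mprod A x))"

definition products_span :: "('d \<Rightarrow> complex^'D^'D) \<Rightarrow> nat \<Rightarrow> bool" where
  "products_span A m \<longleftrightarrow> (\<forall>M. \<exists>\<alpha>. M = word_comb A m \<alpha>)"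

lemma word_comb_add: "word_comb A m (\<lambda>x. \<alpha> x + \<beta> x) = word_comb A m \<alpha> + word_comb A m \<beta>"
  by (simp add: word_comb_def cmat.scale_left_distrib sum.distrib)

lemma word_comb_diff: "word_comb A m (\<lambda>x. \<alpha> x - \<beta> x) = word_comb A m \<alpha> - word_comb A m \<beta>"
  by (simp add: word_comb_def cmat.scale_left_diff_distrib sum_subtractf)

lemma word_comb_mult: "word_comb A m (\<lambda>x. c * \<alpha> x) = mscale c (word_comb A m \<alpha>)"
  by (simp add: word_comb_def cmat.scale_sum_right)

lemma word_comb_single:
  fixes A :: "'d::finite \<Rightarrow> complex^'D^'D"
  assumes "length x = m"
  shows "word_comb A m (\<lambda>y. if y = x then c else 0) = mscale c (mprod A x)"
  using assms by (simp add: word_comb_def if_distrib[of "\<lambda>c. mscale c _"] sum.delta' cong: if_cong)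

lemma sum_mscale_regroup:
  fixes F :: "'x \<Rightarrow> complex^'D^'D"
  assumes "finite I" "finite W" "g ` I \<subseteq> W"
  shows "(\<Sum>i\<in>I. mscale (c i) (F (g i))) = (\<Sum>x\<in>W. mscale (\<Sum>i\<in>{i\<in>I. g i = x}. c i) (F x))"
proof -
  have "(\<Sum>i\<in>I. mscale (c i) (F (g i))) = (\<Sum>x\<in>W. \<Sum>i\<in>{i\<in>I. g i = x}. mscale (c i) (F x))"
    unfolding sum.group[OF assms, symmetric] by (rule sum.cong[OF refl], rule sum.cong) auto
  also have "\<dots> = (\<Sum>x\<in>W. mscale (\<Sum>i\<in>{i\<in>I. g i = x}. c i) (F x))"
    by (simp add: cmat.scale_sum_left)
  finally show ?thesis .
qed

lemma scaleR_eq_mscale: "c *\<^sub>R M = mscale (complex_of_real c) M"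
  unfolding vec_eq_iff by (simp add: of_real_def)

lemma subspace_word_combs: "subspace (range (word_comb A m))"
  unfolding subspace_def
proof (intro conjI ballI allI)
  show "0 \<in> range (word_comb A m)"
    using word_comb_mult[of A m 0 "\<lambda>_. 0"] by (simp add: image_iff) blast
next
  fix M N assume "M \<in> range (word_comb A m)" "N \<in> range (word_comb A m)"
  then obtain \<alpha> \<beta> where "M = word_comb A m \<alpha>" "N = word_comb A m \<beta>"
    by blast
  then have "M + N = word_comb A m (\<lambda>x. \<alpha> x + \<beta> x)"
    by (simp add: word_comb_add)
  then show "M + N \<in> range (word_comb A m)"
    by blast
next
  fix c and M assume "M \<in> range (word_comb A m)"
  then obtain \<alpha> where "M = word_comb A m \<alpha>"
    by blast
  then have "c *\<^sub>R M = word_comb A m (\<lambda>x. complex_of_real c * \<alpha> x)"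
    by (simp add: word_comb_mult scaleR_eq_mscale)
  then show "c *\<^sub>R M \<in> range (word_comb A m)"
    by blast
qed

lemma trace_conj_transpose_mult:
  fixes Z M :: "complex^'n^'n"
  defines "W \<equiv> \<chi> i j. cnj (Z $ j $ i)"
  shows "trace (W ** M) = Complex (inner Z M) (- inner Z (mscale \<i> M))"
proof -
  have tr: "trace (W ** M) = (\<Sum>i\<in>UNIV. \<Sum>j\<in>UNIV. cnj (Z $ j $ i) * M $ j $ i)"
    by (simp add: trace_def matrix_matrix_mult_def W_def)
  have "Re (trace (W ** M)) = inner Z M"
    unfolding tr Re_sum by (subst sum.swap) (simp add: inner_vec_def inner_complex_def)
  moreover have "Im (trace (W ** M)) = - inner Z (mscale \<i> M)"
    unfolding tr Im_sum
    by (subst sum.swap) (simp add: inner_vec_def inner_complex_def algebra_simps sum_negf[symmetric])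
  ultimately show ?thesis
    by (simp add: complex_eq_iff)
qed

lemma injective_at_products_span:
  fixes A :: "'d::finite \<Rightarrow> complex^'D::finite^'D"
  assumes inj: "injective_at A L"
  shows "products_span A L"
proof -
  \<comment> \<open>Orthogonal complements live in the real Euclidean space of complex matrices, so \<open>span\<close> is the
    real span here and S also contains the \<open>\<i>\<close>-multiples of the products.\<close>
  define S where "S = mprod A ` words L \<union> (\<lambda>x. mscale \<i> (mprod A x)) ` words L"
  have "span S = UNIV"
  proof (rule ccontr)
    assume "span S \<noteq> UNIV"
    then have "span S \<subset> span UNIV"
      by auto
    then obtain Z :: "complex^'D^'D" where "Z \<noteq> 0" and orth: "\<And>y. y \<in> span S \<Longrightarrow> orthogonal Z y"
      by (rule orthogonal_to_subspace_exists_gen) auto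
    define W :: "complex^'D^'D" where "W = (\<chi> i j. cnj (Z $ j $ i))"
    have "trace (W ** mprod A x) = 0" if "length x = L" for x
    proof -
      have "orthogonal Z (mprod A x)" "orthogonal Z (mscale \<i> (mprod A x))"
        using that by (auto intro!: orth span_base simp: S_def)
      then show ?thesis
        by (simp add: W_def trace_conj_transpose_mult orthogonal_def complex_eq_iff)
    qed
    then have "Gamma A L W = Gamma A L 0"
      unfolding Gamma_def fun_eq_iff by simp
    then have "W = 0"
      using inj by (auto simp: injective_at_def dest: injD)
    with \<open>Z \<noteq> 0\<close> show False
      by (auto simp: W_def vec_eq_iff)
  qed
  moreover have "span S \<subseteq> range (word_comb A L)"
  proof (rule span_minimal[OF _ subspace_word_combs], rule subsetI)
    fix M assume "M \<in> S"
    then obtain x c where "length x = L" "M = mscale c (mprod A x)"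
      unfolding S_def by (metis (no_types, lifting) UnE cmat.scale_one imageE mem_words)
    then show "M \<in> range (word_comb A L)"
      by (metis rangeI word_comb_single)
  qed
  ultimately show ?thesis
    by (auto simp: products_span_def)
qed

definition word_coeffs :: "('d \<Rightarrow> complex^'D^'D) \<Rightarrow> nat \<Rightarrow> complex^'D^'D \<Rightarrow> 'd list \<Rightarrow> complex" where
  "word_coeffs A m M = (SOME \<alpha>. M = word_comb A m \<alpha>)"

lemma word_comb_word_coeffs: "products_span A m \<Longrightarrow> word_comb A m (word_coeffs A m M) = M"
  unfolding products_span_def word_coeffs_def by (metis (mono_tags) someI)

lemma products_span_factor_right:
  fixes A :: "'d::finite \<Rightarrow> complex^'D^'D"
  assumes "products_span A n" "j \<le> n"
  obtains Q where "(\<Sum>w\<in>words j. mprod A w ** Q w) = mat 1"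
proof
  let ?\<alpha> = "word_coeffs A n (mat 1)"
  define Q where "Q w = (\<Sum>x\<in>{x\<in>words n. take j x = w}. mscale (?\<alpha> x) (mprod A (drop j x)))" for w
  have "(\<Sum>w\<in>words j. mprod A w ** Q w) =
      (\<Sum>w\<in>words j. \<Sum>x\<in>{x\<in>words n. take j x = w}. mscale (?\<alpha> x) (mprod A x))"
    unfolding Q_def matrix_sum_ldistrib matrix_mul_mscale_right
    by (intro sum.cong refl) (auto simp: mprod_append[symmetric])
  also have "\<dots> = word_comb A n ?\<alpha>"
    unfolding word_comb_def using assms(2) by (intro sum.group) auto
  finally show "(\<Sum>w\<in>words j. mprod A w ** Q w) = mat 1"
    using word_comb_word_coeffs[OF assms(1)] by simp
qed

lemma products_span_factor_left:
  fixes A :: "'d::finite \<Rightarrow> complex^'D^'D"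
  assumes "products_span A n" "j \<le> n"
  obtains P where "(\<Sum>w\<in>words j. P w ** mprod A w) = mat 1"
proof
  let ?\<alpha> = "word_coeffs A n (mat 1)"
  define P where "P w = (\<Sum>x\<in>{x\<in>words n. drop (n - j) x = w}. mscale (?\<alpha> x) (mprod A (take (n - j) x)))" for w
  have "(\<Sum>w\<in>words j. P w ** mprod A w) =
      (\<Sum>w\<in>words j. \<Sum>x\<in>{x\<in>words n. drop (n - j) x = w}. mscale (?\<alpha> x) (mprod A x))"
    unfolding P_def matrix_sum_rdistrib matrix_mul_mscale_left
    by (intro sum.cong refl) (auto simp: mprod_append[symmetric])
  also have "\<dots> = word_comb A n ?\<alpha>"
    unfolding word_comb_def using assms(2) by (intro sum.group) auto
  finally show "(\<Sum>w\<in>words j. P w ** mprod A w) = mat 1"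
    using word_comb_word_coeffs[OF assms(1)] by simp
qed

lemma products_span_Suc:
  fixes A :: "'d::finite \<Rightarrow> complex^'D^'D"
  assumes "products_span A L" "1 \<le> L" and span_m: "products_span A m"
  shows "products_span A (Suc m)"
  unfolding products_span_def
proof
  fix M :: "complex^'D^'D"
  obtain P where P: "(\<Sum>w\<in>words 1. P w ** mprod A w) = mat 1"
    using products_span_factor_left[OF assms(1,2)] .
  define \<beta> where "\<beta> w = word_coeffs A m (M ** P w)" for w
  have \<beta>: "M ** P w = word_comb A m (\<beta> w)" for w
    by (simp add: \<beta>_def word_comb_word_coeffs[OF span_m])
  have "M = M ** (\<Sum>w\<in>words 1. P w ** mprod A w)"
    unfolding P by simp
  also have "\<dots> = (\<Sum>w\<in>words 1. M ** P w ** mprod A w)"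
    by (simp add: matrix_sum_ldistrib matrix_mul_assoc)
  also have "\<dots> = (\<Sum>w\<in>words 1. \<Sum>y\<in>words m. mscale (\<beta> w y) (mprod A (y @ w)))"
    by (simp add: \<beta> word_comb_def matrix_sum_rdistrib matrix_mul_mscale_left mprod_append)
  also have "\<dots> = (\<Sum>(w, y)\<in>words 1 \<times> words m. mscale (\<beta> w y) (mprod A (y @ w)))"
    by (simp add: sum.cartesian_product)
  also have "\<dots> = word_comb A (Suc m) (\<lambda>z. \<Sum>p\<in>{p\<in>words 1 \<times> words m. snd p @ fst p = z}. \<beta> (fst p) (snd p))"
    unfolding word_comb_def case_prod_beta by (rule sum_mscale_regroup) auto
  finally show "\<exists>\<alpha>. M = word_comb A (Suc m) \<alpha>"
    by blast
qed

lemma products_span_mono: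
  fixes A :: "'d::finite \<Rightarrow> complex^'D^'D"
  assumes "products_span A L" "1 \<le> L" "L \<le> m"
  shows "products_span A m"
  using assms(3)
proof (induct m)
  case (Suc m)
  then show ?case
    using assms(1,2) products_span_Suc by (cases "L = Suc m") auto
qed (use assms(2) in simp)

lemma products_span_trace_zero:
  fixes A :: "'d::finite \<Rightarrow> complex^'D^'D"
  assumes "products_span A m" "\<And>y. length y = m \<Longrightarrow> trace (M ** mprod A y) = 0"
  shows "M = 0"
proof (rule matrix_eq_zero_if_trace_mul_zero)
  fix P
  have "trace (M ** P) = trace (M ** word_comb A m (word_coeffs A m P))"
    by (simp add: word_comb_word_coeffs[OF assms(1)])
  also have "\<dots> = 0"
    by (simp add: word_comb_def matrix_sum_ldistrib matrix_mul_mscale_right trace_sum trace_mscale assms(2))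
  finally show "trace (M ** P) = 0" .
qed

lemma products_span_mult_right_zero:
  fixes A :: "'d::finite \<Rightarrow> complex^'D^'D" and M :: "complex^'D^'D"
  assumes "products_span A m" "\<And>y. length y = m \<Longrightarrow> M ** mprod A y = 0"
  shows "M = 0"
proof -
  obtain Q where Q: "(\<Sum>w\<in>words m. mprod A w ** Q w) = mat 1"
    using products_span_factor_right[OF assms(1) order_refl] .
  have "M = M ** (\<Sum>w\<in>words m. mprod A w ** Q w)"
    by (simp add: Q)
  also have "\<dots> = (\<Sum>w\<in>words m. M ** mprod A w ** Q w)"
    by (simp add: matrix_sum_ldistrib matrix_mul_assoc)
  also have "\<dots> = 0"
    by (simp add: assms(2))
  finally show ?thesis .
qed

lemma mat_linear_eq_on_products:
  fixes A :: "'d::finite \<Rightarrow> complex^'D^'D" and f g :: "complex^'D^'D \<Rightarrow> complex^'D^'D"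
  assumes "mat_linear f" "mat_linear g" "products_span A m"
    and "\<And>x. length x = m \<Longrightarrow> f (mprod A x) = g (mprod A x)"
  shows "f P = g P"
proof -
  have "f P = f (word_comb A m (word_coeffs A m P))"
    by (simp add: word_comb_word_coeffs[OF assms(3)])
  also have "\<dots> = g (word_comb A m (word_coeffs A m P))"
    by (simp add: word_comb_def assms cmat_pair.linear_sum cmat_pair.linear_scale)
  finally show ?thesis
    by (simp add: word_comb_word_coeffs[OF assms(3)])
qed

text \<open>\<open>word_extension\<close> depends on the chosen coefficients of its argument; when f respects all
  linear relations among the products of length m, it does not, and it is the linear map sending
  each \<open>mprod A x\<close> to \<open>f x\<close>.\<close>

definition respects_relations :: "('d \<Rightarrow> complex^'D^'D) \<Rightarrow> nat \<Rightarrow> ('d list \<Rightarrow> complex^'D^'D) \<Rightarrow> bool" where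
  "respects_relations A m f \<longleftrightarrow>
     (\<forall>\<alpha>. word_comb A m \<alpha> = 0 \<longrightarrow> (\<Sum>x\<in>words m. mscale (\<alpha> x) (f x)) = 0)"

definition word_extension ::
    "('d \<Rightarrow> complex^'D^'D) \<Rightarrow> nat \<Rightarrow> ('d list \<Rightarrow> complex^'D^'D) \<Rightarrow> complex^'D^'D \<Rightarrow> complex^'D^'D" where
  "word_extension A m f P = (\<Sum>x\<in>words m. mscale (word_coeffs A m P x) (f x))"

context
  fixes A :: "'d::finite \<Rightarrow> complex^'D^'D" and m f
  assumes span: "products_span A m" and respects: "respects_relations A m f"
begin

lemma word_extension_word_comb:
  "word_extension A m f (word_comb A m \<alpha>) = (\<Sum>x\<in>words m. mscale (\<alpha> x) (f x))"
proof -
  let ?\<beta> = "word_coeffs A m (word_comb A m \<alpha>)"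
  have "word_comb A m (\<lambda>x. \<alpha> x - ?\<beta> x) = 0"
    by (simp add: word_comb_diff word_comb_word_coeffs[OF span])
  then have "(\<Sum>x\<in>words m. mscale (\<alpha> x - ?\<beta> x) (f x)) = 0"
    using respects by (simp add: respects_relations_def)
  then show ?thesis
    by (simp add: word_extension_def cmat.scale_left_diff_distrib sum_subtractf)
qed

lemma word_extension_mprod: "length x = m \<Longrightarrow> word_extension A m f (mprod A x) = f x"
  using word_extension_word_comb[of "\<lambda>y. if y = x then 1 else 0"]
  by (simp add: word_comb_single if_distrib[of "\<lambda>c. mscale c _"] sum.delta' cong: if_cong)

lemma mat_linear_word_extension: "mat_linear (word_extension A m f)"
proof -
  have "word_extension A m f (P + Q) = word_extension A m f P + word_extension A m f Q" for P Q
    using word_extension_word_comb[of "\<lambda>x. word_coeffs A m P x + word_coeffs A m Q x"]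
    by (simp add: word_comb_add word_comb_word_coeffs[OF span] word_extension_def
        cmat.scale_left_distrib sum.distrib)
  moreover have "word_extension A m f (mscale c P) = mscale c (word_extension A m f P)" for c P
    using word_extension_word_comb[of "\<lambda>x. c * word_coeffs A m P x"]
    by (simp add: word_comb_mult word_comb_word_coeffs[OF span] word_extension_def cmat.scale_sum_right)
  ultimately show ?thesis
    by (simp add: Vector_Spaces.linear_iff cmat.vector_space_axioms)
qed

end

section \<open>Chain sums and cyclic sums\<close>

definition chain_sum ::
    "('d \<Rightarrow> complex^'D^'D) \<Rightarrow> ('d list \<Rightarrow> complex^'D^'D) \<Rightarrow> nat \<Rightarrow> 'd list \<Rightarrow> complex^'D^'D" where
  "chain_sum A X k s =
     (\<Sum>i<Suc (length s) - k. mprod A (take i s) ** X (take k (drop i s)) ** mprod A (drop (i + k) s))"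

definition window_trace ::
    "('d \<Rightarrow> complex^'D^'D) \<Rightarrow> ('d list \<Rightarrow> complex^'D^'D) \<Rightarrow> nat \<Rightarrow> 'd list \<Rightarrow> complex" where
  "window_trace A X k ys = trace (X (take k ys) ** mprod A (drop k ys))"

definition cyclic_sum ::
    "('d \<Rightarrow> complex^'D^'D) \<Rightarrow> ('d list \<Rightarrow> complex^'D^'D) \<Rightarrow> nat \<Rightarrow> 'd list \<Rightarrow> complex" where
  "cyclic_sum A X k ys = (\<Sum>i<length ys. window_trace A X k (rotate i ys))"

definition telescoping_form ::
    "('d \<Rightarrow> complex^'D^'D) \<Rightarrow> nat \<Rightarrow> ('d list \<Rightarrow> complex^'D^'D) \<Rightarrow> ('d list \<Rightarrow> complex^'D^'D) \<Rightarrow> bool" where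
  "telescoping_form A k X B \<longleftrightarrow>
     (\<forall>w. length w = k \<longrightarrow> X w = A (hd w) ** B (tl w) - B (butlast w) ** A (last w))"

lemma chain_sum_short: "length s < k \<Longrightarrow> chain_sum A X k s = 0"
  by (simp add: chain_sum_def)

lemma chain_sum_window: "length s = k \<Longrightarrow> chain_sum A X k s = X s"
  by (simp add: chain_sum_def)

lemma chain_sum_Cons:
  "chain_sum A X k (a # s) = A a ** chain_sum A X k s +
     (if k \<le> Suc (length s) then X (take k (a # s)) ** mprod A (drop k (a # s)) else 0)"
proof (cases "k \<le> Suc (length s)")
  case True
  then have e: "Suc (length (a # s)) - k = Suc (Suc (length s) - k)"
    by simp
  show ?thesis
    unfolding chain_sum_def e sum.lessThan_Suc_shift
    by (simp add: True matrix_sum_ldistrib matrix_mul_assoc add.commute)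
qed (simp add: chain_sum_def)

text \<open>A window of length k cannot contain the overlap w of length \<open>k - 1\<close> together with sites on
  both sides of it.\<close>

lemma chain_sum_append_overlap:
  assumes "1 \<le> k" "length w = k - 1"
  shows "chain_sum A X k (p @ w @ q) = chain_sum A X k (p @ w) ** mprod A q + mprod A p ** chain_sum A X k (w @ q)"
proof (induct p)
  case Nil
  then show ?case
    using assms by (simp add: chain_sum_short)
next
  case (Cons a p)
  have "k - length (a # p @ w) = 0"
    using assms by simp
  then have "take k (a # p @ w @ q) = take k (a # p @ w)" "drop k (a # p @ w @ q) = drop k (a # p @ w) @ q"
    using take_append[of k "a # p @ w" q] drop_append[of k "a # p @ w" q] by simp_all
  moreover have "k \<le> Suc (length (p @ w))"
    using assms by simp
  ultimately show ?case
    unfolding append_Cons chain_sum_Cons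
    by (simp add: Cons mprod_append matrix_add_ldistrib matrix_add_rdistrib matrix_mul_assoc)
qed

lemma chain_sum_window_Cons:
  assumes "1 \<le> k" "length z = k"
  shows "chain_sum A X k (z @ y) = X z ** mprod A y + A (hd z) ** chain_sum A X k (tl z @ y)"
proof -
  obtain a t where z: "z = a # t"
    using assms by (cases z) auto
  have "chain_sum A X k ([a] @ t @ y) = chain_sum A X k ([a] @ t) ** mprod A y + mprod A [a] ** chain_sum A X k (t @ y)"
    using assms z by (intro chain_sum_append_overlap) auto
  then show ?thesis
    using assms(2) z by (simp add: chain_sum_window add.commute)
qed

lemma chain_sum_window_snoc:
  assumes "1 \<le> k" "length z = k"
  shows "chain_sum A X k (p @ z) = chain_sum A X k (p @ butlast z) ** A (last z) + mprod A p ** X z"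
proof -
  obtain t a where z: "z = t @ [a]"
    using assms by (cases z rule: rev_cases) auto
  have "chain_sum A X k (p @ t @ [a]) = chain_sum A X k (p @ t) ** mprod A [a] + mprod A p ** chain_sum A X k (t @ [a])"
    using assms z by (intro chain_sum_append_overlap) auto
  then show ?thesis
    using assms(2) z by (simp add: chain_sum_window)
qed

lemma chain_sum_diff: "chain_sum A (\<lambda>w. X w - Y w) k s = chain_sum A X k s - chain_sum A Y k s"
  by (simp add: chain_sum_def matrix_diff_ldistrib matrix_diff_rdistrib sum_subtractf)

lemma chain_sum_central:
  assumes central: "\<And>M. D ** M = M ** D"
  shows "chain_sum A (\<lambda>w. D ** mprod A w) k s = mscale (of_nat (Suc (length s) - k)) (D ** mprod A s)"
proof -
  have "mprod A (take i s) ** (D ** mprod A (take k (drop i s))) ** mprod A (drop (i + k) s) = D ** mprod A s" for i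
  proof -
    have "s = take i s @ take k (drop i s) @ drop (i + k) s"
      by (metis append_take_drop_id drop_drop add.commute)
    then have "mprod A s = mprod A (take i s) ** mprod A (take k (drop i s)) ** mprod A (drop (i + k) s)"
      by (metis mprod_append matrix_mul_assoc)
    then show ?thesis
      by (metis central matrix_mul_assoc)
  qed
  then show ?thesis
    by (simp add: chain_sum_def cmat.sum_constant_scale del: sum_constant)
qed

lemma trace_central_mprod_rotate:
  assumes central: "\<And>M. D ** M = M ** D"
  shows "trace (D ** mprod A (rotate n xs)) = trace (D ** mprod A xs)"
proof -
  let ?j = "n mod length xs"
  have "trace (D ** mprod A (rotate n xs)) = trace ((D ** mprod A (drop ?j xs)) ** mprod A (take ?j xs))"
    by (simp add: rotate_drop_take mprod_append matrix_mul_assoc)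
  also have "\<dots> = trace (mprod A (take ?j xs) ** (D ** mprod A (drop ?j xs)))"
    by (rule trace_mul_sym)
  also have "\<dots> = trace (D ** mprod A xs)"
    by (metis append_take_drop_id central matrix_mul_assoc mprod_append)
  finally show ?thesis .
qed

lemma trace_mprod_rotate: "trace (mprod A (rotate n xs)) = trace (mprod A xs)"
  using trace_central_mprod_rotate[of "mat 1"] by simp

lemma cyclic_sum_add: "cyclic_sum A (\<lambda>w. X w + Y w) k ys = cyclic_sum A X k ys + cyclic_sum A Y k ys"
  by (simp add: cyclic_sum_def window_trace_def matrix_add_rdistrib trace_add sum.distrib)

lemma cyclic_sum_central:
  assumes "\<And>M. D ** M = M ** D"
  shows "cyclic_sum A (\<lambda>w. D ** mprod A w) k ys = of_nat (length ys) * trace (D ** mprod A ys)"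
proof -
  have "window_trace A (\<lambda>w. D ** mprod A w) k (rotate i ys) = trace (D ** mprod A ys)" for i
    by (simp add: window_trace_def matrix_mul_assoc[symmetric] mprod_append[symmetric]
        trace_central_mprod_rotate[OF assms])
  then show ?thesis
    by (simp add: cyclic_sum_def)
qed

lemma sum_window_trace_rotate:
  assumes "1 \<le> k"
  shows "(\<Sum>i<Suc (length s) - k. window_trace A X k (rotate i (s @ t))) = trace (chain_sum A X k s ** mprod A t)"
proof -
  have "window_trace A X k (rotate i (s @ t)) =
      trace (mprod A (take i s) ** X (take k (drop i s)) ** mprod A (drop (i + k) s) ** mprod A t)"
    if "i < Suc (length s) - k" for i
  proof -
    have ik: "i + k \<le> length s"
      using that by simp
    have rot: "rotate i (s @ t) = drop i s @ t @ take i s"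
      using assms ik by (simp add: rotate_drop_take)
    have tk: "take k (drop i s @ t @ take i s) = take k (drop i s)"
      using ik by simp
    have dk: "drop k (drop i s @ t @ take i s) = drop (i + k) s @ t @ take i s"
      using ik by (simp add: add.commute)
    have "window_trace A X k (rotate i (s @ t)) =
        trace ((X (take k (drop i s)) ** mprod A (drop (i + k) s) ** mprod A t) ** mprod A (take i s))"
      unfolding window_trace_def rot tk dk by (simp add: mprod_append matrix_mul_assoc)
    then show ?thesis
      by (simp add: trace_mul_sym[of _ "mprod A (take i s)"] matrix_mul_assoc)
  qed
  then show ?thesis
    by (simp add: chain_sum_def matrix_sum_rdistrib trace_sum)
qed

lemma sum_lessThan_add: "(\<Sum>i<m + r. f i) = (\<Sum>i<m. f i) + (\<Sum>j<r. f (m + j) :: 'a::comm_monoid_add)"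
  for m r :: nat
  by (induct r) (simp_all add: add.assoc)

text \<open>Splitting the ring at two overlaps of length \<open>k - 1\<close> distributes the windows over two open
  chains.\<close>

lemma cyclic_sum_split:
  assumes k: "1 \<le> k" and u: "length u = k - 1" and v: "length v = k - 1"
  shows "cyclic_sum A X k (u @ x @ v @ y) =
    trace (chain_sum A X k (u @ x @ v) ** mprod A y) + trace (chain_sum A X k (v @ y @ u) ** mprod A x)"
proof -
  let ?m = "length (u @ x)" and ?r = "length (v @ y)"
  have m: "?m = Suc (length (u @ x @ v)) - k" and r: "?r = Suc (length (v @ y @ u)) - k"
    using u v k by simp_all
  have "cyclic_sum A X k (u @ x @ v @ y) = (\<Sum>i<?m + ?r. window_trace A X k (rotate i (u @ x @ v @ y)))"
    by (simp add: cyclic_sum_def add.assoc)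
  also have "\<dots> = (\<Sum>i<?m. window_trace A X k (rotate i (u @ x @ v @ y))) +
      (\<Sum>j<?r. window_trace A X k (rotate (?m + j) (u @ x @ v @ y)))"
    by (rule sum_lessThan_add)
  also have "(\<Sum>i<?m. window_trace A X k (rotate i (u @ x @ v @ y))) =
      trace (chain_sum A X k (u @ x @ v) ** mprod A y)"
    using sum_window_trace_rotate[OF k, where A = A and X = X and s = "u @ x @ v" and t = y]
    unfolding m by simp
  also have "(\<Sum>j<?r. window_trace A X k (rotate (?m + j) (u @ x @ v @ y))) =
      (\<Sum>j<?r. window_trace A X k (rotate j ((v @ y @ u) @ x)))"
  proof (rule sum.cong[OF refl])
    fix j
    have "rotate (?m + j) (u @ x @ v @ y) = rotate j (rotate ?m ((u @ x) @ (v @ y)))"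
      by (simp add: rotate_rotate add.commute)
    also have "\<dots> = rotate j ((v @ y) @ (u @ x))"
      by (simp only: rotate_append)
    finally show "window_trace A X k (rotate (?m + j) (u @ x @ v @ y)) =
        window_trace A X k (rotate j ((v @ y @ u) @ x))"
      by simp
  qed
  also have "\<dots> = trace (chain_sum A X k (v @ y @ u) ** mprod A x)"
    unfolding r by (rule sum_window_trace_rotate[OF k])
  finally show ?thesis .
qed

lemma window_trace_telescoping:
  assumes k: "1 \<le> k" "k \<le> length zs" and X: "telescoping_form A k X B"
  defines "g \<equiv> \<lambda>ys. trace (B (take (k - 1) ys) ** mprod A (drop (k - 1) ys))"
  shows "window_trace A X k zs = g (rotate1 zs) - g zs"
proof -
  obtain a t where zs: "zs = a # t"
    using k by (cases zs) auto
  have t: "k - 1 \<le> length t"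
    using k zs by simp
  have "hd (take k zs) = a" "tl (take k zs) = take (k - 1) t"
    using k zs by (cases k; simp)+
  moreover have "butlast (take k zs) = take (k - 1) zs" "last (take k zs) = zs ! (k - 1)"
    using k zs by (simp_all add: butlast_take last_conv_nth min_def)
  ultimately have X_zs: "X (take k zs) = A a ** B (take (k - 1) t) - B (take (k - 1) zs) ** A (zs ! (k - 1))"
    using X k by (simp add: telescoping_form_def)
  have "drop (k - 1) zs = zs ! (k - 1) # drop k zs"
    using k Cons_nth_drop_Suc[of "k - 1" zs] by simp
  then have right: "trace (B (take (k - 1) zs) ** A (zs ! (k - 1)) ** mprod A (drop k zs)) = g zs"
    by (simp add: g_def matrix_mul_assoc)
  have "drop k zs = drop (k - 1) t"
    using zs k by (cases k) auto
  then have "trace (A a ** B (take (k - 1) t) ** mprod A (drop k zs)) =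
      trace (A a ** (B (take (k - 1) t) ** mprod A (drop (k - 1) t)))"
    by (simp add: matrix_mul_assoc)
  also have "\<dots> = trace (B (take (k - 1) t) ** mprod A (drop (k - 1) t) ** A a)"
    by (rule trace_mul_sym)
  also have "\<dots> = g (rotate1 zs)"
    using t by (simp add: g_def zs mprod_snoc matrix_mul_assoc)
  finally show ?thesis
    using right by (simp add: window_trace_def X_zs matrix_diff_rdistrib trace_sub)
qed

lemma cyclic_sum_telescoping:
  assumes "1 \<le> k" "k \<le> length ys" "telescoping_form A k X B"
  shows "cyclic_sum A X k ys = 0"
proof -
  define g where "g ys = trace (B (take (k - 1) ys) ** mprod A (drop (k - 1) ys))" for ys
  have "window_trace A X k (rotate i ys) = g (rotate (Suc i) ys) - g (rotate i ys)" for i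
  proof -
    have "window_trace A X k (rotate i ys) = g (rotate1 (rotate i ys)) - g (rotate i ys)"
      unfolding g_def by (rule window_trace_telescoping) (use assms in auto)
    then show ?thesis
      by (simp add: rotate_rotate[of 1, simplified])
  qed
  then have "cyclic_sum A X k ys = (\<Sum>i<length ys. g (rotate (Suc i) ys) - g (rotate i ys))"
    by (simp add: cyclic_sum_def)
  also have "\<dots> = g (rotate (length ys) ys) - g (rotate 0 ys)"
    by (rule sum_lessThan_telescope)
  finally show ?thesis
    by simp
qed

lemma chain_sum_respects_relations:
  fixes A :: "'d::finite \<Rightarrow> complex^'D^'D"
  assumes k: "1 \<le> k" and vanish: "\<And>ys. length ys = N \<Longrightarrow> cyclic_sum A X k ys = 0"
    and u: "length u = k - 1" and v: "length v = k - 1"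
    and span: "products_span A m" and N: "l + m + 2 * (k - 1) = N"
  shows "respects_relations A l (\<lambda>x. chain_sum A X k (u @ x @ v))"
  unfolding respects_relations_def
proof (intro allI impI)
  fix \<alpha> assume rel: "word_comb A l \<alpha> = 0"
  define M where "M = (\<Sum>x\<in>words l. mscale (\<alpha> x) (chain_sum A X k (u @ x @ v)))"
  have "trace (M ** mprod A y) = 0" if y: "length y = m" for y
  proof -
    have swap: "trace (chain_sum A X k (u @ x @ v) ** mprod A y) = - trace (chain_sum A X k (v @ y @ u) ** mprod A x)"
      if "length x = l" for x
    proof -
      have "cyclic_sum A X k (u @ x @ v @ y) = 0"
        using that u v y N by (intro vanish) simp
      then show ?thesis
        unfolding cyclic_sum_split[OF k u v] by (simp add: eq_neg_iff_add_eq_0)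
    qed
    have "trace (M ** mprod A y) = (\<Sum>x\<in>words l. \<alpha> x * trace (chain_sum A X k (u @ x @ v) ** mprod A y))"
      by (simp add: M_def matrix_sum_rdistrib matrix_mul_mscale_left trace_sum trace_mscale)
    also have "\<dots> = - (\<Sum>x\<in>words l. \<alpha> x * trace (chain_sum A X k (v @ y @ u) ** mprod A x))"
      by (simp add: swap sum_negf)
    also have "\<dots> = - trace (chain_sum A X k (v @ y @ u) ** word_comb A l \<alpha>)"
      by (simp add: word_comb_def matrix_sum_ldistrib matrix_mul_mscale_right trace_sum trace_mscale)
    finally show ?thesis
      by (simp add: rel)
  qed
  then show "(\<Sum>x\<in>words l. mscale (\<alpha> x) (chain_sum A X k (u @ x @ v))) = 0"
    using products_span_trace_zero[OF span] by (simp add: M_def)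
qed

section \<open>The eigenvalue equation as a cyclic sum\<close>

lemma local_window_eq_take_rotate:
  assumes "length xs = N" "k \<le> N" "i < N"
  shows "local_window N k i xs = take k (rotate i xs)"
  using assms by (intro nth_equalityI) (auto simp: local_window_def nth_rotate)

lemma rotate_site_update:
  assumes len: "length xs = N" and js: "length js = k" and "k \<le> N" and i: "i < N"
  shows "rotate i (site_update N i js xs) = js @ drop k (rotate i xs)"
proof (rule nth_equalityI)
  show "length (rotate i (site_update N i js xs)) = length (js @ drop k (rotate i xs))"
    using assms by (simp add: site_update_def)
next
  fix p assume "p < length (rotate i (site_update N i js xs))"
  then have p: "p < N"
    by (simp add: site_update_def)
  have "((i + p) mod N + N - i) mod N = ((i + p) mod N + (N - i)) mod N"
    using i by simp
  also have "\<dots> = ((i + p) + (N - i)) mod N"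
    by (simp add: mod_add_left_eq)
  also have "(i + p) + (N - i) = p + N"
    using i by simp
  finally have offset: "((i + p) mod N + N - i) mod N = p"
    using p by simp
  show "rotate i (site_update N i js xs) ! p = (js @ drop k (rotate i xs)) ! p"
    using p len js assms(3) by (auto simp: nth_rotate site_update_def offset nth_append)
qed

text \<open>With \<open>c = E / N\<close> this is the matrix on the left-hand side of the characterization.\<close>

definition local_term ::
    "('d \<Rightarrow> complex^'D^'D) \<Rightarrow> ('d list \<Rightarrow> 'd list \<Rightarrow> complex) \<Rightarrow> complex \<Rightarrow> nat \<Rightarrow> 'd list \<Rightarrow> complex^'D^'D" where
  "local_term A h c k w = (\<Sum>js\<in>words k. mscale (h w js - c * (if w = js then 1 else 0)) (mprod A js))"

lemma window_trace_local_term: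
  fixes A :: "'d::finite \<Rightarrow> complex^'D^'D"
  assumes len: "length xs = N" and "k \<le> N" "i < N"
  shows "window_trace A (local_term A h c k) k (rotate i xs) =
    (\<Sum>js\<in>words k. h (local_window N k i xs) js * trace (mprod A (site_update N i js xs))) - c * trace (mprod A xs)"
proof -
  let ?w = "take k (rotate i xs)" and ?R = "mprod A (drop k (rotate i xs))"
  have w: "length ?w = k"
    using assms by simp
  have "trace (mprod A js ** ?R) = trace (mprod A (site_update N i js xs))" if "length js = k" for js
    using rotate_site_update[OF len that assms(2,3)] trace_mprod_rotate[of A i "site_update N i js xs"]
    by (simp add: mprod_append)
  moreover have "trace (mprod A ?w ** ?R) = trace (mprod A xs)"
    by (simp add: mprod_append[symmetric] trace_mprod_rotate)
  ultimately have "window_trace A (local_term A h c k) k (rotate i xs) =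
      (\<Sum>js\<in>words k. h ?w js * trace (mprod A (site_update N i js xs))) - c * trace (mprod A xs)"
    using w by (simp add: window_trace_def local_term_def matrix_sum_rdistrib matrix_mul_mscale_left
        trace_sum trace_mscale left_diff_distrib sum_subtractf if_distrib[of "\<lambda>x. x * _"]
        if_distrib[of "\<lambda>x. _ * x"] sum.delta'
        cong: if_cong)
  then show ?thesis
    using local_window_eq_take_rotate[OF assms] by simp
qed

lemma local_sum_op_eigen_defect:
  fixes A :: "'d::finite \<Rightarrow> complex^'D^'D"
  assumes len: "length xs = N" and "1 \<le> k" "k \<le> N"
  shows "local_sum_op N k h (mps_state A N) xs - E * mps_state A N xs =
    cyclic_sum A (local_term A h (E / of_nat N) k) k xs"
proof -
  have N: "of_nat N * (E / of_nat N) = E"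
    using assms by simp
  have "cyclic_sum A (local_term A h (E / of_nat N) k) k xs =
      (\<Sum>i<N. \<Sum>js\<in>words k. h (local_window N k i xs) js * trace (mprod A (site_update N i js xs))) -
      of_nat N * (E / of_nat N) * trace (mprod A xs)"
    using assms by (simp add: cyclic_sum_def window_trace_local_term sum_subtractf)
  then show ?thesis
    using assms by (simp add: N local_sum_op_def mps_state_def site_update_def)
qed

lemma local_sum_op_eigen_iff:
  fixes A :: "'d::finite \<Rightarrow> complex^'D^'D"
  assumes "length xs = N" "1 \<le> k" "k \<le> N"
  shows "local_sum_op N k h (mps_state A N) xs = E * mps_state A N xs \<longleftrightarrow>
    cyclic_sum A (local_term A h (E / of_nat N) k) k xs = 0"
  using local_sum_op_eigen_defect[OF assms, where h = h and E = E] by (metis right_minus_eq)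

section \<open>Families of maps obeying a chain Leibniz rule\<close>

text \<open>The maps \<open>\<delta> u v\<close> behave like derivations that are twisted by the products of the words u
  and v. Using factorizations of the identity through products of length j, the part of \<open>\<delta> u v\<close>
  not accounted for by u and v separately is an ordinary derivation, hence inner.\<close>

locale chain_derivation =
  fixes A :: "'d::finite \<Rightarrow> complex^'D::finite^'D" and j :: nat
    and \<delta> :: "'d list \<Rightarrow> 'd list \<Rightarrow> complex^'D^'D \<Rightarrow> complex^'D^'D"
    and P Q :: "'d list \<Rightarrow> complex^'D^'D"
  assumes linear_delta: "\<And>u v. length u = j \<Longrightarrow> length v = j \<Longrightarrow> mat_linear (\<delta> u v)"
    and leibniz: "\<And>u v w M N. length u = j \<Longrightarrow> length v = j \<Longrightarrow> length w = j \<Longrightarrow>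
      \<delta> u v (M ** mprod A w ** N) = \<delta> u w M ** N ** mprod A v + mprod A u ** M ** \<delta> w v N"
    and left_unit: "(\<Sum>w\<in>words j. P w ** mprod A w) = mat 1"
    and right_unit: "(\<Sum>w\<in>words j. mprod A w ** Q w) = mat 1"
begin

definition left_part :: "'d list \<Rightarrow> complex^'D^'D" where
  "left_part u = (\<Sum>w\<in>words j. \<delta> u w (P w))"

definition right_part :: "'d list \<Rightarrow> complex^'D^'D" where
  "right_part v = (\<Sum>w\<in>words j. \<delta> w v (Q w))"

definition middle :: "complex^'D^'D \<Rightarrow> complex^'D^'D" where
  "middle M = (\<Sum>w\<in>words j. \<Sum>w'\<in>words j. P w ** \<delta> w w' M ** Q w')"

lemma mat_linear_middle: "mat_linear middle"
  unfolding middle_def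
  by (intro cmat_pair.linear_compose_sum ballI mat_linear_compose_mul_left mat_linear_compose_mul_right
      linear_delta)
    auto

lemma decomposition:
  assumes u: "length u = j" and v: "length v = j"
  shows "\<delta> u v M = mprod A u ** M ** right_part v + left_part u ** M ** mprod A v + mprod A u ** middle M ** mprod A v"
proof -
  have summand: "\<delta> u v (P w ** mprod A w ** (M ** mprod A w' ** Q w')) =
      \<delta> u w (P w) ** M ** mprod A w' ** Q w' ** mprod A v
      + mprod A u ** (P w ** \<delta> w w' M ** Q w') ** mprod A v
      + mprod A u ** P w ** mprod A w ** M ** \<delta> w' v (Q w')"
    if "length w = j" "length w' = j" for w w'
  proof -
    have "\<delta> u v (P w ** mprod A w ** (M ** mprod A w' ** Q w')) =
        \<delta> u w (P w) ** (M ** mprod A w' ** Q w') ** mprod A v + mprod A u ** P w ** \<delta> w v (M ** mprod A w' ** Q w')"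
      using u v that by (intro leibniz)
    moreover have "\<delta> w v (M ** mprod A w' ** Q w') = \<delta> w w' M ** Q w' ** mprod A v + mprod A w ** M ** \<delta> w' v (Q w')"
      using v that by (intro leibniz)
    ultimately show ?thesis
      by (simp add: matrix_add_ldistrib matrix_mul_assoc add.assoc)
  qed
  have "M = (\<Sum>w\<in>words j. P w ** mprod A w) ** M ** (\<Sum>w'\<in>words j. mprod A w' ** Q w')"
    by (simp add: left_unit right_unit)
  also have "\<dots> = (\<Sum>w\<in>words j. \<Sum>w'\<in>words j. P w ** mprod A w ** (M ** mprod A w' ** Q w'))"
    by (simp add: matrix_sum_ldistrib matrix_sum_rdistrib matrix_mul_assoc) (rule sum.swap)
  finally have "\<delta> u v M = \<delta> u v (\<Sum>w\<in>words j. \<Sum>w'\<in>words j. P w ** mprod A w ** (M ** mprod A w' ** Q w'))"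
    by (rule arg_cong)
  also have "\<dots> = (\<Sum>w\<in>words j. \<Sum>w'\<in>words j. \<delta> u w (P w) ** M ** mprod A w' ** Q w' ** mprod A v)
      + (\<Sum>w\<in>words j. \<Sum>w'\<in>words j. mprod A u ** (P w ** \<delta> w w' M ** Q w') ** mprod A v)
      + (\<Sum>w\<in>words j. \<Sum>w'\<in>words j. mprod A u ** P w ** mprod A w ** M ** \<delta> w' v (Q w'))"
    by (simp add: cmat_pair.linear_sum[OF linear_delta[OF u v]] summand sum.distrib)
  also have "(\<Sum>w\<in>words j. \<Sum>w'\<in>words j. \<delta> u w (P w) ** M ** mprod A w' ** Q w' ** mprod A v) =
      left_part u ** M ** (\<Sum>w'\<in>words j. mprod A w' ** Q w') ** mprod A v"
    by (simp add: left_part_def matrix_sum_ldistrib matrix_sum_rdistrib matrix_mul_assoc) (rule sum.swap)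
  also have "(\<Sum>w\<in>words j. \<Sum>w'\<in>words j. mprod A u ** (P w ** \<delta> w w' M ** Q w') ** mprod A v) =
      mprod A u ** middle M ** mprod A v"
    by (simp add: middle_def matrix_sum_ldistrib matrix_sum_rdistrib)
  also have "(\<Sum>w\<in>words j. \<Sum>w'\<in>words j. mprod A u ** P w ** mprod A w ** M ** \<delta> w' v (Q w')) =
      mprod A u ** (\<Sum>w\<in>words j. P w ** mprod A w) ** M ** right_part v"
    by (simp add: right_part_def matrix_sum_ldistrib matrix_sum_rdistrib matrix_mul_assoc) (rule sum.swap)
  finally show ?thesis
    by (simp add: left_unit right_unit add_ac)
qed

lemma sandwich_zero:
  assumes "\<And>u v. length u = j \<Longrightarrow> length v = j \<Longrightarrow> mprod A u ** M ** mprod A v = 0"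
  shows "M = 0"
proof -
  have "M = (\<Sum>u\<in>words j. P u ** mprod A u) ** M ** (\<Sum>v\<in>words j. mprod A v ** Q v)"
    by (simp add: left_unit right_unit)
  also have "\<dots> = (\<Sum>u\<in>words j. \<Sum>v\<in>words j. P u ** (mprod A u ** M ** mprod A v) ** Q v)"
    by (simp add: matrix_sum_ldistrib matrix_sum_rdistrib matrix_mul_assoc) (rule sum.swap)
  also have "\<dots> = 0"
    by (simp add: assms)
  finally show ?thesis .
qed

lemma middle_mult_word:
  assumes w: "length w = j"
  shows "middle (M ** mprod A w ** N) =
    middle M ** mprod A w ** N + M ** mprod A w ** middle N + M ** (left_part w + right_part w) ** N"
proof -
  have "middle (M ** mprod A w ** N) - (middle M ** mprod A w ** N + M ** mprod A w ** middle N
      + M ** (left_part w + right_part w) ** N) = 0"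
  proof (rule sandwich_zero)
    fix u v :: "'d list" assume u: "length u = j" and v: "length v = j"
    show "mprod A u ** (middle (M ** mprod A w ** N) - (middle M ** mprod A w ** N + M ** mprod A w ** middle N
        + M ** (left_part w + right_part w) ** N)) ** mprod A v = 0"
      using leibniz[OF u v w, of M N]
      unfolding decomposition[OF u v] decomposition[OF u w] decomposition[OF w v]
      by (simp add: matrix_add_ldistrib matrix_add_rdistrib matrix_diff_ldistrib matrix_diff_rdistrib
          matrix_mul_assoc algebra_simps)
  qed
  then show ?thesis
    by simp
qed

lemma middle_mult: "middle (M ** N) = middle M ** N + M ** middle N - M ** middle (mat 1) ** N"
proof -
  have expand: "X ** N = (\<Sum>w\<in>words j. X ** mprod A w ** (Q w ** N))" for X :: "complex^'D^'D"
  proof -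
    have "X ** N = X ** (\<Sum>w\<in>words j. mprod A w ** Q w) ** N"
      by (simp add: right_unit)
    then show ?thesis
      by (simp add: matrix_sum_ldistrib matrix_sum_rdistrib matrix_mul_assoc)
  qed
  have word: "middle (M ** mprod A w ** R) = middle M ** mprod A w ** R + M ** middle (mprod A w ** R)
      - M ** middle (mat 1) ** mprod A w ** R" if "length w = j" for w R
    using middle_mult_word[OF that, of M R] middle_mult_word[OF that, of "mat 1" R]
    by (simp add: matrix_add_ldistrib matrix_mul_assoc algebra_simps)
  have "middle (M ** N) = (\<Sum>w\<in>words j. middle (M ** mprod A w ** (Q w ** N)))"
    by (subst expand) (simp add: cmat_pair.linear_sum[OF mat_linear_middle])
  also have "\<dots> = (\<Sum>w\<in>words j. middle M ** mprod A w ** (Q w ** N))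
      + (\<Sum>w\<in>words j. M ** middle (mprod A w ** (Q w ** N)))
      - (\<Sum>w\<in>words j. M ** middle (mat 1) ** mprod A w ** (Q w ** N))"
    by (simp add: word sum.distrib sum_subtractf)
  also have "\<dots> = middle M ** N + M ** middle N - M ** middle (mat 1) ** N"
    using expand[of "middle M"] expand[of "M ** middle (mat 1)"] expand[of "mat 1"]
    by (simp add: matrix_sum_ldistrib[symmetric] cmat_pair.linear_sum[OF mat_linear_middle, symmetric])
  finally show ?thesis .
qed

lemma middle_inner:
  obtains G where "\<And>M. middle M = middle (mat 1) ** M + G ** M - M ** G"
proof -
  have "mat_linear (\<lambda>M. middle M - middle (mat 1) ** M)"
    by (intro cmat_pair.linear_compose_sub mat_linear_middle mat_linear_mul_left)
  moreover have "middle (M ** N) - middle (mat 1) ** (M ** N) =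
      (middle M - middle (mat 1) ** M) ** N + M ** (middle N - middle (mat 1) ** N)" for M N
    by (simp add: middle_mult matrix_diff_ldistrib matrix_diff_rdistrib matrix_mul_assoc)
  ultimately obtain G where "\<And>M. middle M - middle (mat 1) ** M = G ** M - M ** G"
    using derivation_is_inner by blast
  then have "middle M = middle (mat 1) ** M + G ** M - M ** G" for M
    by (simp add: algebra_simps)
  with that show ?thesis
    by blast
qed

theorem commutator_form:
  obtains B where "\<And>u v M. length u = j \<Longrightarrow> length v = j \<Longrightarrow>
    \<delta> u v M = mprod A u ** M ** B v - B u ** M ** mprod A v"
proof -
  obtain G where G: "\<And>M. middle M = middle (mat 1) ** M + G ** M - M ** G"
    using middle_inner by blast
  define B where "B v = right_part v - G ** mprod A v" for v
  define B' where "B' u = left_part u + mprod A u ** (middle (mat 1) + G)" for u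
  have split: "\<delta> u v M = mprod A u ** M ** B v + B' u ** M ** mprod A v"
    if "length u = j" "length v = j" for u v M
    unfolding decomposition[OF that] G[of M] B_def B'_def
    by (simp add: matrix_add_ldistrib matrix_add_rdistrib matrix_diff_ldistrib matrix_diff_rdistrib
        matrix_mul_assoc algebra_simps)
  have "B w + B' w = 0" if w: "length w = j" for w
  proof (rule sandwich_zero)
    fix u v :: "'d list" assume u: "length u = j" and v: "length v = j"
    show "mprod A u ** (B w + B' w) ** mprod A v = 0"
      using leibniz[OF u v w, of "mat 1" "mat 1"]
      unfolding split[OF u v] split[OF u w] split[OF w v]
      by (simp add: matrix_add_ldistrib matrix_add_rdistrib matrix_mul_assoc algebra_simps)
  qed
  then have "B' w = - B w" if "length w = j" for w
    using that by (simp add: eq_neg_iff_add_eq_0 add.commute)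
  then show ?thesis
    by (intro that[of B]) (simp add: split matrix_mul_uminus_left)
qed

end

lemma chain_derivation_structure:
  fixes A :: "'d::finite \<Rightarrow> complex^'D::finite^'D"
  assumes "products_span A n" "j \<le> n"
    and "\<And>u v. length u = j \<Longrightarrow> length v = j \<Longrightarrow> mat_linear (\<delta> u v)"
    and "\<And>u v w M N. length u = j \<Longrightarrow> length v = j \<Longrightarrow> length w = j \<Longrightarrow>
      \<delta> u v (M ** mprod A w ** N) = \<delta> u w M ** N ** mprod A v + mprod A u ** M ** \<delta> w v N"
  obtains B where "\<And>u v M. length u = j \<Longrightarrow> length v = j \<Longrightarrow>
    \<delta> u v M = mprod A u ** M ** B v - B u ** M ** mprod A v"
proof -
  obtain P where "(\<Sum>w\<in>words j. P w ** mprod A w) = mat 1"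
    using products_span_factor_left[OF assms(1,2)] .
  moreover obtain Q where "(\<Sum>w\<in>words j. mprod A w ** Q w) = mat 1"
    using products_span_factor_right[OF assms(1,2)] .
  ultimately interpret chain_derivation A j \<delta> P Q
    using assms(3,4) by (simp add: chain_derivation_def)
  show ?thesis
    using commutator_form that by blast
qed

section \<open>Vanishing cyclic sums force the telescoping form\<close>

lemma shift_commutation:
  fixes \<phi> :: "'d list \<Rightarrow> complex^'D^'D"
  assumes shift: "\<And>s. length s = Suc n \<Longrightarrow> A (hd s) ** \<phi> (tl s) = \<phi> (butlast s) ** A (last s)"
    and "length p = n" "length q = n"
  shows "mprod A p ** \<phi> q = \<phi> p ** mprod A q"
proof -
  have "mprod A p ** \<phi> (r @ q) = \<phi> (p @ r) ** mprod A q"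
    if "j \<le> n" "length p = j" "length q = j" "length r = n - j" for j p q r
    using that
  proof (induct j arbitrary: p q r)
    case (Suc j)
    obtain a p' b q' where p: "p = a # p'" and q: "q = b # q'"
      using Suc by (cases p; cases q) auto
    have IH: "mprod A p' ** \<phi> ((r @ [b]) @ q') = \<phi> (p' @ r @ [b]) ** mprod A q'"
      using Suc p q by (intro Suc(1)) auto
    have step: "A a ** \<phi> (p' @ r @ [b]) = \<phi> (a # p' @ r) ** A b"
      using shift[of "a # p' @ r @ [b]"] Suc p by (simp add: butlast_append)
    have "mprod A p ** \<phi> (r @ q) = A a ** (mprod A p' ** \<phi> ((r @ [b]) @ q'))"
      by (simp add: p q matrix_mul_assoc)
    also have "\<dots> = (A a ** \<phi> (p' @ r @ [b])) ** mprod A q'"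
      by (simp only: IH matrix_mul_assoc)
    also have "\<dots> = \<phi> (p @ r) ** mprod A q"
      by (simp add: step p q matrix_mul_assoc)
    finally show ?case .
  qed simp
  from this[of n p q "[]"] show ?thesis
    using assms(2,3) by simp
qed

lemma products_span_commuting_family:
  fixes A :: "'d::finite \<Rightarrow> complex^'D::finite^'D" and \<phi> :: "'d list \<Rightarrow> complex^'D^'D"
  assumes span: "products_span A n"
    and commute: "\<And>p q. length p = n \<Longrightarrow> length q = n \<Longrightarrow> mprod A p ** \<phi> q = \<phi> p ** mprod A q"
  obtains D where "\<And>M. D ** M = M ** D" "\<And>q. length q = n \<Longrightarrow> \<phi> q = D ** mprod A q"
proof -
  define \<alpha> where "\<alpha> = word_coeffs A n (mat 1)"
  have unit: "word_comb A n \<alpha> = mat 1"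
    by (simp add: \<alpha>_def word_comb_word_coeffs[OF span])
  define D where "D = (\<Sum>p\<in>words n. mscale (\<alpha> p) (\<phi> p))"
  have right: "\<phi> q = D ** mprod A q" if "length q = n" for q
  proof -
    have "\<phi> q = word_comb A n \<alpha> ** \<phi> q"
      by (simp add: unit)
    also have "\<dots> = (\<Sum>p\<in>words n. mscale (\<alpha> p) (\<phi> p ** mprod A q))"
      using that by (simp add: word_comb_def matrix_sum_rdistrib matrix_mul_mscale_left commute)
    finally show ?thesis
      by (simp add: D_def matrix_sum_rdistrib matrix_mul_mscale_left)
  qed
  have left: "\<phi> p = mprod A p ** D" if "length p = n" for p
  proof -
    have "\<phi> p = \<phi> p ** word_comb A n \<alpha>"
      by (simp add: unit)
    also have "\<dots> = (\<Sum>q\<in>words n. mscale (\<alpha> q) (mprod A p ** \<phi> q))"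
      using that by (simp add: word_comb_def matrix_sum_ldistrib matrix_mul_mscale_right commute)
    finally show ?thesis
      by (simp add: D_def matrix_sum_ldistrib matrix_mul_mscale_right)
  qed
  have "D ** M = M ** D" for M
    by (rule mat_linear_eq_on_products[OF mat_linear_mul_left mat_linear_mul_right span])
      (simp add: left[symmetric] right[symmetric])
  with right that show ?thesis
    by blast
qed

locale vanishing_cyclic_sums =
  fixes A :: "'d::finite \<Rightarrow> complex^'D::finite^'D" and X :: "'d list \<Rightarrow> complex^'D^'D" and k L N :: nat
  assumes k: "1 \<le> k" and L: "1 \<le> L" and span: "products_span A L" and N: "2 * L + 2 * k \<le> N"
    and vanish: "\<And>ys. length ys = N \<Longrightarrow> cyclic_sum A X k ys = 0"
begin

lemma products_span_ge: "L \<le> m \<Longrightarrow> products_span A m"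
  by (rule products_span_mono[OF span L])

lemma chain_sum_respects:
  assumes "length u = k - 1" "length v = k - 1" "L \<le> l" "l \<le> L + 2"
  shows "respects_relations A l (\<lambda>x. chain_sum A X k (u @ x @ v))"
proof (rule chain_sum_respects_relations[OF k vanish assms(1,2)])
  show "products_span A (N - 2 * (k - 1) - l)"
    using assms N k by (intro products_span_ge) linarith
  show "l + (N - 2 * (k - 1) - l) + 2 * (k - 1) = N"
    using assms N k by linarith
qed

text \<open>For \<open>L \<le> l \<le> L + 2\<close> the open chain sums with fixed boundary words u and v define a linear
  map on matrices, because the vanishing of the cyclic sums makes them respect every linear
  relation among the products of length l.\<close>

definition chain_map :: "nat \<Rightarrow> 'd list \<Rightarrow> 'd list \<Rightarrow> complex^'D^'D \<Rightarrow> complex^'D^'D" where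
  "chain_map l u v = word_extension A l (\<lambda>x. chain_sum A X k (u @ x @ v))"

lemma chain_map_mprod:
  assumes "length u = k - 1" "length v = k - 1" "L \<le> l" "l \<le> L + 2" "length x = l"
  shows "chain_map l u v (mprod A x) = chain_sum A X k (u @ x @ v)"
  unfolding chain_map_def
  using assms products_span_ge[OF assms(3)] chain_sum_respects[OF assms(1-4)] by (simp add: word_extension_mprod)

lemma mat_linear_chain_map:
  assumes "length u = k - 1" "length v = k - 1" "L \<le> l" "l \<le> L + 2"
  shows "mat_linear (chain_map l u v)"
  unfolding chain_map_def
  using products_span_ge[OF assms(3)] chain_sum_respects[OF assms] by (rule mat_linear_word_extension)

lemma chain_map_Suc_left:
  assumes z: "length z = k" and v: "length v = k - 1" and l: "L \<le> l" "l \<le> L + 1"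
  shows "chain_map (Suc l) (butlast z) v (A (last z) ** P) = A (hd z) ** chain_map l (tl z) v P + X z ** P ** mprod A v"
proof -
  have lin_lhs: "mat_linear (\<lambda>P. chain_map (Suc l) (butlast z) v (A (last z) ** P))"
    using z v l by (intro mat_linear_mul_left_compose mat_linear_chain_map) auto
  have lin_rhs: "mat_linear (\<lambda>P. A (hd z) ** chain_map l (tl z) v P + X z ** P ** mprod A v)"
    using z v l by (intro cmat_pair.linear_compose_add mat_linear_compose_mul_left mat_linear_chain_map
        mat_linear_mul_both) auto
  have "chain_map (Suc l) (butlast z) v (A (last z) ** mprod A x) =
      A (hd z) ** chain_map l (tl z) v (mprod A x) + X z ** mprod A x ** mprod A v"
    if x: "length x = l" for x
  proof -
    obtain t a where zs: "z = t @ [a]"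
      using z k by (cases z rule: rev_cases) auto
    have "chain_map (Suc l) (butlast z) v (A (last z) ** mprod A x) = chain_sum A X k (z @ x @ v)"
      using chain_map_mprod[of t v "Suc l" "a # x"] z v l x zs by simp
    also have "\<dots> = A (hd z) ** chain_map l (tl z) v (mprod A x) + X z ** mprod A x ** mprod A v"
      using chain_sum_window_Cons[OF k z, where A = A and X = X and y = "x @ v"] chain_map_mprod[of "tl z" v l x] z v l x
      by (simp add: mprod_append matrix_mul_assoc add.commute)
    finally show ?thesis .
  qed
  from mat_linear_eq_on_products[OF lin_lhs lin_rhs products_span_ge[OF l(1)] this]
  show ?thesis .
qed

lemma chain_map_Suc_right:
  assumes z: "length z = k" and u: "length u = k - 1" and l: "L \<le> l" "l \<le> L + 1"
  shows "chain_map (Suc l) u (tl z) (P ** A (hd z)) = chain_map l u (butlast z) P ** A (last z) + mprod A u ** P ** X z"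
proof -
  have lin_lhs: "mat_linear (\<lambda>P. chain_map (Suc l) u (tl z) (P ** A (hd z)))"
    using z u l by (intro mat_linear_mul_right_compose mat_linear_chain_map) auto
  have lin_rhs: "mat_linear (\<lambda>P. chain_map l u (butlast z) P ** A (last z) + mprod A u ** P ** X z)"
    using z u l by (intro cmat_pair.linear_compose_add mat_linear_compose_mul_right mat_linear_chain_map
        mat_linear_mul_both) auto
  have "chain_map (Suc l) u (tl z) (mprod A x ** A (hd z)) =
      chain_map l u (butlast z) (mprod A x) ** A (last z) + mprod A u ** mprod A x ** X z"
    if x: "length x = l" for x
  proof -
    obtain a t where zs: "z = a # t"
      using z k by (cases z) auto
    have "chain_map (Suc l) u (tl z) (mprod A x ** A (hd z)) = chain_sum A X k ((u @ x) @ z)"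
      using chain_map_mprod[of u t "Suc l" "x @ [a]"] z u l x zs by (simp add: mprod_snoc)
    also have "\<dots> = chain_map l u (butlast z) (mprod A x) ** A (last z) + mprod A u ** mprod A x ** X z"
      using chain_sum_window_snoc[OF k z, where A = A and X = X and p = "u @ x"] chain_map_mprod[of u "butlast z" l x] z u l x
      by (simp add: mprod_append matrix_mul_assoc)
    finally show ?thesis .
  qed
  from mat_linear_eq_on_products[OF lin_lhs lin_rhs products_span_ge[OF l(1)] this]
  show ?thesis .
qed

definition chain_increment :: "nat \<Rightarrow> 'd list \<Rightarrow> 'd list \<Rightarrow> complex^'D^'D \<Rightarrow> complex^'D^'D" where
  "chain_increment l u v P = chain_map (Suc l) u v P - chain_map l u v P"

lemma chain_increment_commute:
  assumes z: "length z = k" and z': "length z' = k"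
  shows "A (hd z) ** chain_increment L (tl z) (tl z') (P ** A (hd z')) =
    chain_increment L (butlast z) (butlast z') (A (last z) ** P) ** A (last z')"
proof -
  have "A (hd z) ** chain_increment L (tl z) (tl z') (P ** A (hd z')) =
      chain_increment (Suc L) (butlast z) (tl z') (A (last z) ** (P ** A (hd z')))"
    using chain_map_Suc_left[OF z, of "tl z'" "Suc L"] chain_map_Suc_left[OF z, of "tl z'" L] z'
    by (simp add: chain_increment_def matrix_diff_ldistrib)
  also have "\<dots> = chain_increment L (butlast z) (butlast z') (A (last z) ** P) ** A (last z')"
    using chain_map_Suc_right[OF z', of "butlast z" "Suc L"] chain_map_Suc_right[OF z', of "butlast z" L] z
    by (simp add: chain_increment_def matrix_diff_rdistrib matrix_mul_assoc)
  finally show ?thesis .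
qed

text \<open>Reading a word as \<open>u @ x @ v\<close> with boundary words of length \<open>k - 1\<close>, the increments of
  the chain maps become a function of words that commutes with the products of A.\<close>

definition word_increment :: "'d list \<Rightarrow> complex^'D^'D" where
  "word_increment s = chain_increment L (take (k - 1) s) (drop (length s - (k - 1)) s)
     (mprod A (drop (k - 1) (take (length s - (k - 1)) s)))"

lemma word_increment_append:
  assumes "length u = k - 1" "length v = k - 1"
  shows "word_increment (u @ x @ v) = chain_increment L u v (mprod A x)"
proof -
  have "take (length (u @ x @ v) - (k - 1)) (u @ x @ v) = u @ x"
    "drop (length (u @ x @ v) - (k - 1)) (u @ x @ v) = v"
    using assms by simp_all
  then show ?thesis
    using assms by (simp add: word_increment_def)
qed

lemma word_increment_shift:
  assumes s: "2 * k \<le> length s"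
  shows "A (hd s) ** word_increment (tl s) = word_increment (butlast s) ** A (last s)"
proof -
  define z where "z = take k s"
  define z' where "z' = drop (length s - k) s"
  define m where "m = drop k (take (length s - k) s)"
  have z: "length z = k" and z': "length z' = k"
    using s by (auto simp: z_def z'_def)
  have "k \<le> length s - k"
    using s by linarith
  then have "take k (take (length s - k) s) = z"
    by (simp add: z_def min_def)
  then have "take (length s - k) s = z @ m"
    unfolding m_def by (metis append_take_drop_id)
  then have s_split: "s = z @ m @ z'"
    unfolding z'_def by (metis append.assoc append_take_drop_id)
  have "z \<noteq> []" "z' \<noteq> []"
    using z z' k by auto
  then have "tl s = tl z @ (m @ [hd z']) @ tl z'" "butlast s = butlast z @ ([last z] @ m) @ butlast z'"
    "hd s = hd z" "last s = last z'"
    unfolding s_split by (auto simp: butlast_append neq_Nil_conv)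
  moreover have "length (tl z) = k - 1" "length (tl z') = k - 1" "length (butlast z) = k - 1"
    "length (butlast z') = k - 1"
    using z z' by auto
  ultimately show ?thesis
    using chain_increment_commute[OF z z', of "mprod A m"]
      word_increment_append[of "tl z" "tl z'" "m @ [hd z']"]
      word_increment_append[of "butlast z" "butlast z'" "[last z] @ m"]
    by (simp add: mprod_snoc)
qed

lemma word_increment_commute:
  assumes "length p = L + 2 * k - 2" "length q = L + 2 * k - 2"
  shows "mprod A p ** word_increment q = word_increment p ** mprod A q"
  using assms k L by (intro shift_commutation[where n = "L + 2 * k - 2"] word_increment_shift) auto

definition central_defect :: "complex^'D^'D" where
  "central_defect = (SOME D. (\<forall>M. D ** M = M ** D) \<and>
     (\<forall>q. length q = L + 2 * k - 2 \<longrightarrow> word_increment q = D ** mprod A q))"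

lemma central_defect:
  "(\<forall>M. central_defect ** M = M ** central_defect) \<and>
   (\<forall>q. length q = L + 2 * k - 2 \<longrightarrow> word_increment q = central_defect ** mprod A q)"
proof -
  have "products_span A (L + 2 * k - 2)"
    using k by (intro products_span_ge) simp
  then obtain D where "\<And>M. D ** M = M ** D" "\<And>q. length q = L + 2 * k - 2 \<Longrightarrow> word_increment q = D ** mprod A q"
    using products_span_commuting_family word_increment_commute by blast
  then have "\<exists>D. (\<forall>M. D ** M = M ** D) \<and> (\<forall>q. length q = L + 2 * k - 2 \<longrightarrow> word_increment q = D ** mprod A q)"
    by blast
  then show ?thesis
    unfolding central_defect_def by (rule someI_ex)
qed

lemma central_defect_commute: "central_defect ** M = M ** central_defect"
  using central_defect by blast

lemma chain_increment_eq:
  assumes u: "length u = k - 1" and v: "length v = k - 1"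
  shows "chain_increment L u v P = central_defect ** mprod A u ** P ** mprod A v"
proof (rule mat_linear_eq_on_products[OF _ mat_linear_mul_both span])
  show "mat_linear (chain_increment L u v)"
    unfolding chain_increment_def[abs_def]
    using u v by (intro cmat_pair.linear_compose_sub mat_linear_chain_map) auto
next
  fix x :: "'d list" assume "length x = L"
  then show "chain_increment L u v (mprod A x) = central_defect ** mprod A u ** mprod A x ** mprod A v"
    using central_defect u v k
    by (simp add: word_increment_append[symmetric] mprod_append matrix_mul_assoc)
qed

lemma chain_sum_growth:
  assumes u: "length u = k - 1" and v: "length v = k - 1" and x: "length x = L + d"
  shows "chain_sum A X k (u @ x @ v) = chain_map L u v (mprod A x) + mscale (of_nat d) (central_defect ** mprod A (u @ x @ v))"
  using u x
proof (induct d arbitrary: u x)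
  case 0
  then show ?case
    using v by (simp add: chain_map_mprod)
next
  case (Suc d)
  obtain c x' where x: "x = c # x'"
    using Suc by (cases x) auto
  define z where "z = u @ [c]"
  have z: "length z = k" and tl_z: "length (tl z) = k - 1" and x': "length x' = L + d"
    using Suc k x by (simp_all add: z_def)
  have "chain_sum A X k (u @ x @ v) = X z ** mprod A (x' @ v) + A (hd z) ** chain_sum A X k (tl z @ x' @ v)"
    using chain_sum_window_Cons[OF k z] by (simp add: x z_def)
  also have "\<dots> = X z ** mprod A x' ** mprod A v + A (hd z) ** chain_map L (tl z) v (mprod A x')
      + mscale (of_nat d) (central_defect ** mprod A (u @ x @ v))"
  proof -
    have "A (hd z) ** (central_defect ** mprod A (tl z @ x' @ v)) =
        central_defect ** (A (hd z) ** mprod A (tl z @ x' @ v))"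
      by (metis central_defect_commute matrix_mul_assoc)
    also have "\<dots> = central_defect ** mprod A (u @ x @ v)"
      by (cases u) (simp_all add: z_def x)
    finally have "A (hd z) ** (central_defect ** mprod A (tl z @ x' @ v)) = central_defect ** mprod A (u @ x @ v)" .
    then show ?thesis
      by (simp add: Suc(1)[OF tl_z x'] mprod_append matrix_add_ldistrib matrix_mul_mscale_right
          matrix_mul_assoc add.assoc)
  qed
  also have "X z ** mprod A x' ** mprod A v + A (hd z) ** chain_map L (tl z) v (mprod A x') =
      chain_map (Suc L) u v (A c ** mprod A x')"
    using chain_map_Suc_left[OF z v, of L "mprod A x'"] by (simp add: z_def add.commute)
  also have "\<dots> = chain_map L u v (mprod A x) + central_defect ** mprod A (u @ x @ v)"
    using chain_increment_eq[OF Suc(2) v, of "mprod A x"]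
    by (simp add: chain_increment_def x mprod_append matrix_mul_assoc diff_eq_eq add.commute)
  finally show ?case
    by (simp add: cmat.scale_left_distrib add_ac)
qed

definition reduced_term :: "'d list \<Rightarrow> complex^'D^'D" where
  "reduced_term w = X w - central_defect ** mprod A w"

definition reduced_map :: "'d list \<Rightarrow> 'd list \<Rightarrow> complex^'D^'D \<Rightarrow> complex^'D^'D" where
  "reduced_map u v P =
     chain_map L u v P - mscale (of_nat (L + k - 1)) (central_defect ** mprod A u ** P ** mprod A v)"

lemma reduced_map_mprod:
  assumes u: "length u = k - 1" and v: "length v = k - 1" and x: "length x = L + d"
  shows "reduced_map u v (mprod A x) = chain_sum A reduced_term k (u @ x @ v)"
proof -
  have "chain_sum A reduced_term k (u @ x @ v) =
      chain_sum A X k (u @ x @ v) - mscale (of_nat (L + k - 1 + d)) (central_defect ** mprod A (u @ x @ v))"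
    using u v x k
    by (simp add: reduced_term_def[abs_def] chain_sum_diff chain_sum_central[OF central_defect_commute])
  then show ?thesis
    by (simp add: reduced_map_def chain_sum_growth[OF assms] mprod_append matrix_mul_assoc
        cmat.scale_left_distrib)
qed

lemma mat_linear_reduced_map:
  "length u = k - 1 \<Longrightarrow> length v = k - 1 \<Longrightarrow> mat_linear (reduced_map u v)"
  unfolding reduced_map_def[abs_def]
  by (intro cmat_pair.linear_compose_sub cmat_pair.linear_compose_scale_right mat_linear_chain_map
      mat_linear_mul_both[of "_ ** _", unfolded matrix_mul_assoc]) auto

lemma reduced_map_leibniz:
  assumes u: "length u = k - 1" and v: "length v = k - 1" and w: "length w = k - 1"
  shows "reduced_map u v (P ** mprod A w ** Q) = reduced_map u w P ** Q ** mprod A v + mprod A u ** P ** reduced_map w v Q"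
proof -
  have on_words: "reduced_map u v (mprod A x ** mprod A w ** mprod A y) =
      reduced_map u w (mprod A x) ** mprod A y ** mprod A v + mprod A u ** mprod A x ** reduced_map w v (mprod A y)"
    if x: "length x = L" and y: "length y = L" for x y
  proof -
    have "reduced_map u v (mprod A x ** mprod A w ** mprod A y) = chain_sum A reduced_term k ((u @ x) @ w @ (y @ v))"
      using reduced_map_mprod[OF u v, where x = "x @ w @ y" and d = "L + (k - 1)"] x y w
      by (simp add: mprod_append matrix_mul_assoc)
    also have "\<dots> = chain_sum A reduced_term k (u @ x @ w) ** mprod A (y @ v) + mprod A (u @ x) ** chain_sum A reduced_term k (w @ y @ v)"
      using chain_sum_append_overlap[OF k w, where A = A and X = reduced_term and p = "u @ x" and q = "y @ v"]
      by simp
    also have "\<dots> = reduced_map u w (mprod A x) ** mprod A y ** mprod A v + mprod A u ** mprod A x ** reduced_map w v (mprod A y)"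
      using reduced_map_mprod[OF u w, where x = x and d = 0] reduced_map_mprod[OF w v, where x = y and d = 0] x y
      by (simp add: mprod_append matrix_mul_assoc)
    finally show ?thesis .
  qed
  have on_left_words: "reduced_map u v (mprod A x ** mprod A w ** R) =
      reduced_map u w (mprod A x) ** R ** mprod A v + mprod A u ** mprod A x ** reduced_map w v R"
    if x: "length x = L" for x R
  proof -
    have "mat_linear (\<lambda>R. reduced_map u v (mprod A x ** mprod A w ** R))"
      using u v by (intro mat_linear_mul_left_compose mat_linear_reduced_map)
    moreover have "mat_linear (\<lambda>R. reduced_map u w (mprod A x) ** R ** mprod A v + mprod A u ** mprod A x ** reduced_map w v R)"
      using w v by (intro cmat_pair.linear_compose_add mat_linear_mul_both mat_linear_compose_mul_left
          mat_linear_reduced_map)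
    ultimately show ?thesis
      using mat_linear_eq_on_products[OF _ _ span] on_words[OF x] by blast
  qed
  have lin_lhs: "mat_linear (\<lambda>P. reduced_map u v (P ** (mprod A w ** Q)))"
    using u v by (intro mat_linear_mul_right_compose mat_linear_reduced_map)
  have lin_rhs: "mat_linear (\<lambda>P. reduced_map u w P ** Q ** mprod A v + mprod A u ** P ** reduced_map w v Q)"
    using u w by (intro cmat_pair.linear_compose_add mat_linear_mul_both mat_linear_compose_mul_right
        mat_linear_reduced_map)
  have "reduced_map u v (P ** (mprod A w ** Q)) =
      reduced_map u w P ** Q ** mprod A v + mprod A u ** P ** reduced_map w v Q"
    using mat_linear_eq_on_products[OF lin_lhs lin_rhs span] on_left_words by (simp add: matrix_mul_assoc)
  then show ?thesis
    by (simp add: matrix_mul_assoc)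
qed

lemma reduced_term_eq_of_form:
  assumes B: "\<And>u v P. length u = k - 1 \<Longrightarrow> length v = k - 1 \<Longrightarrow>
      reduced_map u v P = mprod A u ** P ** B v - B u ** P ** mprod A v"
    and z: "length z = k"
  shows "reduced_term z = A (hd z) ** B (tl z) - B (butlast z) ** A (last z)"
proof -
  define M where "M = reduced_term z - A (hd z) ** B (tl z) + B (butlast z) ** A (last z)"
  obtain t a where zs: "z = t @ [a]"
    using z k by (cases z rule: rev_cases) auto
  have lz: "length (butlast z) = k - 1" "length (tl z) = k - 1"
    using z by auto
  have "mprod A z = A (hd z) ** mprod A (tl z)"
    using z k by (cases z) auto
  then have Az: "mprod A (butlast z) ** A (last z) = A (hd z) ** mprod A (tl z)"
    by (simp add: zs mprod_snoc)
  have M_words: "M ** mprod A (x @ v) = 0" if x: "length x = L" and v: "length v = k - 1" for x v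
  proof -
    have "reduced_map (butlast z) v (A (last z) ** mprod A x) = chain_sum A reduced_term k (z @ x @ v)"
      using reduced_map_mprod[OF lz(1) v, where x = "last z # x" and d = 1] x zs by simp
    also have "\<dots> = reduced_term z ** mprod A (x @ v) + A (hd z) ** reduced_map (tl z) v (mprod A x)"
      using chain_sum_window_Cons[OF k z] reduced_map_mprod[OF lz(2) v, where x = x and d = 0] x by simp
    finally have "mprod A (butlast z) ** A (last z) ** mprod A x ** B v - B (butlast z) ** A (last z) ** mprod A x ** mprod A v
        = reduced_term z ** mprod A x ** mprod A v + A (hd z) ** (mprod A (tl z) ** mprod A x ** B v - B (tl z) ** mprod A x ** mprod A v)"
      unfolding B[OF lz(1) v] B[OF lz(2) v] by (simp add: mprod_append matrix_mul_assoc)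
    then show ?thesis
      unfolding Az M_def
      by (simp add: mprod_append matrix_add_rdistrib matrix_diff_rdistrib matrix_diff_ldistrib matrix_mul_assoc
          algebra_simps)
  qed
  have "M ** mprod A y = 0" if "length y = L + (k - 1)" for y
  proof -
    have "M ** mprod A (take L y @ drop L y) = 0"
      using that by (intro M_words) simp_all
    then show ?thesis
      by simp
  qed
  then have "M = 0"
    using products_span_mult_right_zero[OF products_span_ge[of "L + (k - 1)"]] by simp
  then show ?thesis
    by (simp add: M_def algebra_simps)
qed

lemma reduced_term_telescoping:
  obtains B where "telescoping_form A k reduced_term B"
proof -
  obtain B where "\<And>u v P. length u = k - 1 \<Longrightarrow> length v = k - 1 \<Longrightarrow>
      reduced_map u v P = mprod A u ** P ** B v - B u ** P ** mprod A v"
    using chain_derivation_structure[OF products_span_ge[of "L + (k - 1)"], of "k - 1" reduced_map]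
      mat_linear_reduced_map reduced_map_leibniz by auto
  then show ?thesis
    using that reduced_term_eq_of_form by (auto simp: telescoping_form_def)
qed

text \<open>A telescoping term has vanishing cyclic sums, so the central defect pairs trivially with
  every product of length N.\<close>

lemma central_defect_zero: "central_defect = 0"
proof (rule products_span_trace_zero[OF products_span_ge[of N]])
  obtain B where B: "telescoping_form A k reduced_term B"
    by (rule reduced_term_telescoping)
  fix ys :: "'d list" assume ys: "length ys = N"
  have "0 = cyclic_sum A (\<lambda>w. reduced_term w + central_defect ** mprod A w) k ys"
    using vanish[OF ys] by (simp add: reduced_term_def)
  also have "\<dots> = of_nat N * trace (central_defect ** mprod A ys)"
    using cyclic_sum_telescoping[OF k _ B, of ys] ys N
    by (simp add: cyclic_sum_add cyclic_sum_central[OF central_defect_commute])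
  finally show "trace (central_defect ** mprod A ys) = 0"
    using N k by simp
qed (use N in simp)

theorem telescoping_form_of_vanishing:
  obtains B where "telescoping_form A k X B"
proof -
  obtain B where "telescoping_form A k reduced_term B"
    by (rule reduced_term_telescoping)
  moreover have "reduced_term = X"
    by (simp add: reduced_term_def[abs_def] central_defect_zero)
  ultimately show ?thesis
    using that by simp
qed

end

theorem cyclic_sums_vanish_iff_telescoping:
  fixes A :: "'d::finite \<Rightarrow> complex^'D::finite^'D"
  assumes "1 \<le> k" "1 \<le> L" "products_span A L" "2 * L + 2 * k \<le> N"
  shows "(\<forall>ys. length ys = N \<longrightarrow> cyclic_sum A X k ys = 0) \<longleftrightarrow> (\<exists>B. telescoping_form A k X B)"
proof
  assume "\<forall>ys. length ys = N \<longrightarrow> cyclic_sum A X k ys = 0"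
  then interpret vanishing_cyclic_sums A X k L N
    using assms by unfold_locales auto
  obtain B where "telescoping_form A k X B"
    by (rule telescoping_form_of_vanishing)
  then show "\<exists>B. telescoping_form A k X B"
    by blast
next
  assume "\<exists>B. telescoping_form A k X B"
  then obtain B where B: "telescoping_form A k X B" ..
  show "\<forall>ys. length ys = N \<longrightarrow> cyclic_sum A X k ys = 0"
  proof (intro allI impI)
    fix ys :: "'d list" assume "length ys = N"
    then show "cyclic_sum A X k ys = 0"
      using assms(4) by (intro cyclic_sum_telescoping[OF assms(1) _ B]) simp
  qed
qed

theorem theorem1:
  fixes A :: "'d::finite \<Rightarrow> complex^'D::finite^'D"
    and h :: "'d list \<Rightarrow> 'd list \<Rightarrow> complex"
    and k L N :: nat
    and E :: complex
  assumes "1 \<le> k"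
    and "injectivity_length A L"
    and "N > 2 * L + 2 * k - 1"
  shows "(\<forall>xs\<in>words N. local_sum_op N k h (mps_state A N) xs = E * mps_state A N xs)
     \<longleftrightarrow> (\<exists>B :: 'd list \<Rightarrow> complex^'D^'D. \<forall>is\<in>words k.
            (\<Sum>js\<in>words k. mscale (h is js - (E / of_nat N) * (if is = js then 1 else 0)) (mprod A js))
            = A (hd is) ** B (tl is) - B (butlast is) ** A (last is))"
proof -
  have L: "1 \<le> L" "products_span A L"
    using assms(2) injective_at_products_span by (auto simp: injectivity_length_def)
  have N: "2 * L + 2 * k \<le> N"
    using assms(1,3) by linarith
  then have "k \<le> N"
    by simp
  have "(\<forall>xs\<in>words N. local_sum_op N k h (mps_state A N) xs = E * mps_state A N xs) \<longleftrightarrow>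
      (\<forall>ys. length ys = N \<longrightarrow> cyclic_sum A (local_term A h (E / of_nat N) k) k ys = 0)"
    using local_sum_op_eigen_iff[OF _ assms(1) \<open>k \<le> N\<close>, where h = h and E = E and A = A]
    by (simp add: Ball_def)
  also have "\<dots> \<longleftrightarrow> (\<exists>B. telescoping_form A k (local_term A h (E / of_nat N) k) B)"
    by (rule cyclic_sums_vanish_iff_telescoping[OF assms(1) L N])
  finally show ?thesis
    by (simp add: telescoping_form_def local_term_def Ball_def)
qed

end
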